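(* Let $f=f_{\mathbb U}(z)=\sum_{n\ge0}a_nz^n$ with $\{a_n\}$ i.i.d. standard complex Gaussians, and let $z_1,\ldots,z_n\in\mathbb U$. Then the random function $z\mapsto T_{z_1}(z)\cdots T_{z_n}(z)f(z)$ has the same distribution as the conditional distribution of $f$ given $f(z_1)=\cdots=f(z_n)=0$.
   Context: $\mathbb U$ is the unit disk; a standard complex Gaussian has density $e^{-z\overline z}/\pi$. For $\beta\in\mathbb U$, $T_\beta(z)=\frac{z-\beta}{1-\overline\beta z}$. Conditioning is Gaussian conditioning: the conditional law of the jointly Gaussian mean zero process $f$ given $(f(z_1),\ldots,f(z_n))=0$ is the law of the process obtained by projecting each $f(z)$ (in $L^2(\mathbf P)$) onto the orthocomplement of the span of $f(z_1),\ldots,f(z_n)$. *)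

theory Defs
  imports "HOL-Probability.Probability"
begin

definition unit_disk :: "complex set" where
  "unit_disk = ball 0 1"

definition std_cgauss_density :: "complex \<Rightarrow> ennreal" where
  "std_cgauss_density z = ennreal (exp (- (norm z * norm z)) / pi)"

definition blaschke :: "complex \<Rightarrow> complex \<Rightarrow> complex" where
  "blaschke \<beta> z = (z - \<beta>) / (1 - cnj \<beta> * z)"

definition GAF :: "(nat \<Rightarrow> 'a \<Rightarrow> complex) \<Rightarrow> 'a \<Rightarrow> complex \<Rightarrow> complex" where
  "GAF a \<omega> z = (\<Sum>k. a k \<omega> * z ^ k)"

definition L2_inner :: "'a measure \<Rightarrow> ('a \<Rightarrow> complex) \<Rightarrow> ('a \<Rightarrow> complex) \<Rightarrow> complex" where
  "L2_inner M X Y = integral\<^sup>L M (\<lambda>\<omega>. X \<omega> * cnj (Y \<omega>))"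

text \<open>g is the process obtained by projecting each F(z) onto the orthocomplement of
  span{F(zs 0),...,F(zs (n-1))} in L^2(P): g(z) is measurable, g(z) = F(z) - (element of
  the span) almost surely, and g(z) is orthogonal to every F(zs k).\<close>
definition conditioned_process ::
  "'a measure \<Rightarrow> ('a \<Rightarrow> complex \<Rightarrow> complex) \<Rightarrow> (nat \<Rightarrow> complex) \<Rightarrow> nat
     \<Rightarrow> ('a \<Rightarrow> complex \<Rightarrow> complex) \<Rightarrow> bool" where
  "conditioned_process M F zs n g \<longleftrightarrow>
     (\<forall>z\<in>unit_disk.
        (\<lambda>\<omega>. g \<omega> z) \<in> borel_measurable M \<and>
        (\<exists>c :: nat \<Rightarrow> complex.
           (AE \<omega> in M. g \<omega> z = F \<omega> z - (\<Sum>j<n. c j * F \<omega> (zs j)))) \<and>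
        (\<forall>k<n. L2_inner M (\<lambda>\<omega>. g \<omega> z) (\<lambda>\<omega>. F \<omega> (zs k)) = 0))"

end

theory Submission
  imports Defs
begin

text \<open>Both processes are Gaussian series in the coefficients \<open>a k\<close>. The process \<open>B z * f z\<close>,
  with \<open>B\<close> the Blaschke product, has coefficient sequence \<open>B z * z ^ k\<close>; since
  \<open>L\<^sup>2\<close>-inner products of such series are the inner products of their (square-summable)
  coefficient sequences, \<open>g z\<close> is almost surely the series with coefficients
  \<open>z ^ k - (\<Sum>j<n. c j * zs j ^ k)\<close>, the residual of \<open>(z ^ k)\<^sub>k\<close> orthogonal to the sequences
  \<open>(zs j ^ k)\<^sub>k\<close>. The joint law of finitely many such series is determined by their covariances
  (via characteristic functions), and the law on the product \<open>\<sigma>\<close>-algebra by the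
  finite-dimensional marginals. Both covariances equal \<open>B w * cnj (B w') * K w w'\<close> with the
  Szego kernel \<open>K w w' = 1 / (1 - w * cnj w')\<close>: for the conditioned process this holds because
  \<open>K w q * (1 - B w * cnj (B q))\<close> is, as a function of \<open>q\<close>, a combination of the \<open>K (zs j) q\<close>
  (induction on \<open>n\<close>) that agrees with \<open>K w q\<close> at the points \<open>zs l\<close>, hence is the orthogonal
  projection of \<open>K w\<close> onto their span.\<close>

section \<open>Measures determined by characteristic functions\<close>

lemma borel_measurable_cnj [measurable]:
  "f \<in> borel_measurable M \<Longrightarrow> (\<lambda>x. cnj (f x)) \<in> borel_measurable M"
  by (rule borel_measurable_continuous_on[OF continuous_on_cnj[OF continuous_on_id]])

lemma borel_measurable_cis [measurable]:
  "f \<in> borel_measurable M \<Longrightarrow> (\<lambda>x. cis (f x)) \<in> borel_measurable M"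
  unfolding cis_conv_exp by measurable

lemma finite_measure_density_bounded:
  assumes "finite_measure M" "f \<in> borel_measurable M" "\<And>x. f x \<le> ennreal C"
  shows "finite_measure (density M f)"
proof (rule finite_measureI)
  interpret finite_measure M by fact
  have "(\<integral>\<^sup>+x. f x \<partial>M) \<le> (\<integral>\<^sup>+x. ennreal C \<partial>M)"
    by (intro nn_integral_mono assms)
  also have "\<dots> < \<infinity>"
  proof -
    have "emeasure M (space M) < \<top>"
      using emeasure_finite[of "space M"] by (simp add: less_top[symmetric])
    then show ?thesis by (simp add: nn_integral_const ennreal_mult_less_top)
  qed
  finally show "emeasure (density M f) (space (density M f)) \<noteq> \<infinity>"
    using assms by (simp add: emeasure_density)
qed

lemma finite_measure_eqI_PiM:
  assumes "finite I" "finite_measure \<mu>" "sets \<mu> = sets (PiM I M)" "sets \<nu> = sets (PiM I M)"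
    and "\<And>A. (\<And>i. i \<in> I \<Longrightarrow> A i \<in> sets (M i)) \<Longrightarrow> emeasure \<mu> (Pi\<^sub>E I A) = emeasure \<nu> (Pi\<^sub>E I A)"
  shows "\<mu> = \<nu>"
proof (rule measure_eqI_PiM_finite[where A="\<lambda>_. space (PiM I M)"])
  have "emeasure \<mu> (space (PiM I M)) \<noteq> \<top>"
    using assms(2) finite_measure.emeasure_finite by blast
  then show "\<And>i::nat. emeasure \<mu> (space (PiM I M)) \<noteq> \<infinity>" by simp
qed (use assms in \<open>auto simp: space_in_prod_algebra space_PiM\<close>)

lemma real_distribution_normalize:
  fixes L :: "real measure"
  assumes L: "finite_measure L" "sets L = sets borel" and m: "measure L UNIV > 0"
  defines "D \<equiv> density L (\<lambda>_. ennreal (1 / measure L UNIV))"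
  shows "real_distribution D"
    and "char D t = (1 / measure L UNIV) *\<^sub>R (CLINT x|L. cis (t * x))"
    and "L = density D (\<lambda>_. ennreal (measure L UNIV))"
proof -
  interpret finite_measure L by fact
  have sp: "space L = UNIV" using sets_eq_imp_space_eq[OF L(2)] by simp
  have "emeasure D (space D) = ennreal (1 / measure L UNIV) * emeasure L UNIV"
    unfolding D_def using sp sets.top[of L] by (simp add: emeasure_density)
  also have "\<dots> = 1"
    using m sp emeasure_eq_measure by (simp add: ennreal_mult''[symmetric])
  finally have "prob_space D" by (rule prob_spaceI)
  then show "real_distribution D"
    by (simp add: real_distribution_def real_distribution_axioms_def D_def L(2))
  show "char D t = (1 / measure L UNIV) *\<^sub>R (CLINT x|L. cis (t * x))"
    unfolding char_def D_def using m L(2) by (subst integral_density) (auto simp: cis_conv_exp)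
  show "L = density D (\<lambda>_. ennreal (measure L UNIV))"
    unfolding D_def using m L(2)
    by (subst density_density_eq) (auto simp: ennreal_mult''[symmetric] density_1)
qed

lemma real_measure_eq_if_char_eq:
  fixes L1 L2 :: "real measure"
  assumes fin: "finite_measure L1" "finite_measure L2"
    and sets: "sets L1 = sets borel" "sets L2 = sets borel"
    and ch: "\<And>t. (CLINT x|L1. cis (t * x)) = (CLINT x|L2. cis (t * x))"
  shows "L1 = L2"
proof -
  interpret L1: finite_measure L1 by fact
  interpret L2: finite_measure L2 by fact
  have sp: "space L1 = UNIV" "space L2 = UNIV"
    using sets_eq_imp_space_eq[OF sets(1)] sets_eq_imp_space_eq[OF sets(2)] by auto
  have "complex_of_real (measure L1 UNIV) = complex_of_real (measure L2 UNIV)"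
    using ch[of 0] sp by (simp add: lebesgue_integral_const)
  then have m: "measure L2 UNIV = measure L1 UNIV" by simp
  show ?thesis
  proof (cases "measure L1 UNIV = 0")
    case True
    then have "emeasure L1 UNIV = 0" "emeasure L2 UNIV = 0"
      using m sp L1.emeasure_eq_measure L2.emeasure_eq_measure by auto
    then have "emeasure L1 A = 0" "emeasure L2 A = 0" for A
      using sp emeasure_space[of L1 A] emeasure_space[of L2 A] by auto
    then show ?thesis
      using sets by (intro measure_eqI) auto
  next
    case False
    then have pos: "measure L1 UNIV > 0" "measure L2 UNIV > 0"
      using measure_nonneg[of L1 UNIV] m by linarith+
    have "density L1 (\<lambda>_. ennreal (1 / measure L1 UNIV))
        = density L2 (\<lambda>_. ennreal (1 / measure L2 UNIV))"
      using real_distribution_normalize[OF fin(1) sets(1) pos(1)]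
        real_distribution_normalize[OF fin(2) sets(2) pos(2)] ch m
      by (intro Levy_uniqueness) (auto simp: fun_eq_iff)
    then show ?thesis
      using real_distribution_normalize(3)[OF fin(1) sets(1) pos(1)]
        real_distribution_normalize(3)[OF fin(2) sets(2) pos(2)] m by metis
  qed
qed

lemma integral_distr_density:
  fixes f :: "real \<Rightarrow> 'b::{banach, second_countable_topology}"
  assumes "Z \<in> borel_measurable M" "w \<in> borel_measurable M" "\<And>y. 0 \<le> w y"
    "f \<in> borel_measurable borel"
  shows "integral\<^sup>L (distr (density M (\<lambda>y. ennreal (w y))) borel Z) f = (\<integral>y. w y *\<^sub>R f (Z y) \<partial>M)"
  using assms by (simp add: integral_distr integral_density)

lemma integral_indicator_weight_eq_if_char_eq:
  fixes \<mu> \<nu> :: "'a measure" and Z w :: "'a \<Rightarrow> real"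
  assumes fin: "finite_measure \<mu>" "finite_measure \<nu>" and sets: "sets \<nu> = sets \<mu>"
    and Z: "Z \<in> borel_measurable \<mu>"
    and w: "w \<in> borel_measurable \<mu>" "\<And>y. 0 \<le> w y" "\<And>y. w y \<le> C"
    and ch: "\<And>t. (CLINT y|\<mu>. cis (t * Z y) * w y) = (CLINT y|\<nu>. cis (t * Z y) * w y)"
    and S: "S \<in> sets borel"
  shows "(LINT y|\<mu>. indicator S (Z y) * w y) = (LINT y|\<nu>. indicator S (Z y) * w y)"
proof -
  have [measurable]: "Z \<in> borel_measurable \<nu>" "w \<in> borel_measurable \<nu>"
    using Z w(1) by (simp_all add: measurable_cong_sets[OF sets refl])
  have finite_distr: "finite_measure (distr (density M (\<lambda>y. ennreal (w y))) borel Z)"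
    if "finite_measure M" "sets M = sets \<mu>" for M
    using that Z w(1,3)
    by (auto intro!: finite_measure.finite_measure_distr finite_measure_density_bounded[where C=C]
        ennreal_leI simp: measurable_cong_sets[OF that(2) refl])
  have "distr (density \<mu> (\<lambda>y. ennreal (w y))) borel Z
      = distr (density \<nu> (\<lambda>y. ennreal (w y))) borel Z"
    using fin sets Z w(1,2) ch
    by (intro real_measure_eq_if_char_eq finite_distr)
      (simp_all add: integral_distr_density scaleR_conv_of_real mult.commute)
  then show ?thesis
    using Z w(1,2) S integral_distr_density[of Z \<mu> w "indicator S :: real \<Rightarrow> real"]
      integral_distr_density[of Z \<nu> w "indicator S :: real \<Rightarrow> real"]
    by (simp add: mult.commute)
qed

lemma integral_indicator_eq_if_char_eq:
  fixes \<mu> \<nu> :: "'a measure" and Z h :: "'a \<Rightarrow> real"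
  assumes fin: "finite_measure \<mu>" "finite_measure \<nu>" and sets: "sets \<nu> = sets \<mu>"
    and Z: "Z \<in> borel_measurable \<mu>" and h: "h \<in> borel_measurable \<mu>" "\<And>y. \<bar>h y\<bar> \<le> 1"
    and ch: "\<And>t. (CLINT y|\<mu>. cis (t * Z y)) = (CLINT y|\<nu>. cis (t * Z y))"
    and ch_h: "\<And>t. (CLINT y|\<mu>. cis (t * Z y) * h y) = (CLINT y|\<nu>. cis (t * Z y) * h y)"
    and S: "S \<in> sets borel"
  shows "(LINT y|\<mu>. indicator S (Z y) * h y) = (LINT y|\<nu>. indicator S (Z y) * h y)"
proof -
  have char_shift: "(CLINT y|M. cis (t * Z y) * (1 + complex_of_real (h y)))
      = (CLINT y|M. cis (t * Z y) * h y) + (CLINT y|M. cis (t * Z y))"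
    and indicator_shift: "(LINT y|M. indicator S (Z y) * (1 + h y))
        = (LINT y|M. indicator S (Z y) * h y) + (LINT y|M. indicator S (Z y))"
    if M: "finite_measure M" "sets M = sets \<mu>" for M t
  proof -
    have [measurable]: "Z \<in> borel_measurable M" "h \<in> borel_measurable M"
      using Z h(1) by (simp_all add: measurable_cong_sets[OF M(2) refl])
    have "integrable M (\<lambda>y. cis (t * Z y) * h y)" "integrable M (\<lambda>y. cis (t * Z y))"
      "integrable M (\<lambda>y. indicator S (Z y) * h y)" "integrable M (\<lambda>y. indicator S (Z y) :: real)"
      using h(2) S by (auto intro!: finite_measure.integrable_const_bound[where B=1] M
          simp: norm_mult indicator_def)
    then show "(CLINT y|M. cis (t * Z y) * (1 + complex_of_real (h y)))
        = (CLINT y|M. cis (t * Z y) * h y) + (CLINT y|M. cis (t * Z y))"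
      and "(LINT y|M. indicator S (Z y) * (1 + h y))
          = (LINT y|M. indicator S (Z y) * h y) + (LINT y|M. indicator S (Z y))"
      by (simp_all add: algebra_simps)
  qed
  have "0 \<le> 1 + h y" "1 + h y \<le> 2" for y
    using h(2)[of y] by auto
  then have "(LINT y|\<mu>. indicator S (Z y) * (1 + h y)) = (LINT y|\<nu>. indicator S (Z y) * (1 + h y))"
    using fin sets Z h(1) ch ch_h S
    by (intro integral_indicator_weight_eq_if_char_eq[where C=2]) (simp_all add: char_shift)
  moreover have "(LINT y|\<mu>. indicator S (Z y) * 1) = (LINT y|\<nu>. indicator S (Z y) * 1 :: real)"
    using fin sets Z ch S by (intro integral_indicator_weight_eq_if_char_eq[where C=1]) simp_all
  ultimately show ?thesis
    using fin sets by (simp add: indicator_shift)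
qed

lemma integral_cis_mult_Re_Im:
  fixes Z :: "'a \<Rightarrow> real" and h :: "'a \<Rightarrow> complex"
  assumes M: "finite_measure M" and [measurable]: "Z \<in> borel_measurable M" "h \<in> borel_measurable M"
    and h: "\<And>y. norm (h y) \<le> 1"
  shows "(CLINT y|M. cis (t * Z y) * Re (h y))
      = ((CLINT y|M. cis (t * Z y) * h y) + (CLINT y|M. cis (t * Z y) * cnj (h y))) / 2"
    and "(CLINT y|M. cis (t * Z y) * Im (h y))
      = ((CLINT y|M. cis (t * Z y) * h y) - (CLINT y|M. cis (t * Z y) * cnj (h y))) / (2 * \<i>)"
proof -
  have int: "integrable M (\<lambda>y. cis (t * Z y) * h y)" "integrable M (\<lambda>y. cis (t * Z y) * cnj (h y))"
    using h by (auto intro!: finite_measure.integrable_const_bound[where B=1] M simp: norm_mult)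
  have Re: "cis (t * Z y) * Re (h y) = (cis (t * Z y) * h y + cis (t * Z y) * cnj (h y)) / 2"
    and Im: "cis (t * Z y) * Im (h y) = (cis (t * Z y) * h y - cis (t * Z y) * cnj (h y)) / (2 * \<i>)"
      for y
    by (simp_all add: complex_eq_iff)
  show "(CLINT y|M. cis (t * Z y) * Re (h y))
      = ((CLINT y|M. cis (t * Z y) * h y) + (CLINT y|M. cis (t * Z y) * cnj (h y))) / 2"
    unfolding Re using int by simp
  show "(CLINT y|M. cis (t * Z y) * Im (h y))
      = ((CLINT y|M. cis (t * Z y) * h y) - (CLINT y|M. cis (t * Z y) * cnj (h y))) / (2 * \<i>)"
    unfolding Im using int by simp
qed

lemma integral_indicator_eq_if_char_eq_complex:
  fixes \<mu> \<nu> :: "'a measure" and Z :: "'a \<Rightarrow> real" and h :: "'a \<Rightarrow> complex"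
  assumes fin: "finite_measure \<mu>" "finite_measure \<nu>" and sets: "sets \<nu> = sets \<mu>"
    and Z: "Z \<in> borel_measurable \<mu>" and h: "h \<in> borel_measurable \<mu>" "\<And>y. norm (h y) \<le> 1"
    and ch: "\<And>t. (CLINT y|\<mu>. cis (t * Z y)) = (CLINT y|\<nu>. cis (t * Z y))"
    and ch_h: "\<And>t. (CLINT y|\<mu>. cis (t * Z y) * h y) = (CLINT y|\<nu>. cis (t * Z y) * h y)"
    and ch_cnj: "\<And>t. (CLINT y|\<mu>. cis (t * Z y) * cnj (h y))
        = (CLINT y|\<nu>. cis (t * Z y) * cnj (h y))"
    and S: "S \<in> sets borel"
  shows "(CLINT y|\<mu>. indicator S (Z y) * h y) = (CLINT y|\<nu>. indicator S (Z y) * h y)"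
proof -
  have [measurable]: "Z \<in> borel_measurable \<nu>" "h \<in> borel_measurable \<nu>"
    using Z h(1) by (simp_all add: measurable_cong_sets[OF sets refl])
  have Re_Im_bound: "\<bar>Re (h y)\<bar> \<le> 1" "\<bar>Im (h y)\<bar> \<le> 1" for y
    using h(2)[of y] abs_Re_le_cmod[of "h y"] abs_Im_le_cmod[of "h y"] by linarith+
  note Re_Im = integral_cis_mult_Re_Im[OF fin(1) Z h] integral_cis_mult_Re_Im[of \<nu> Z h]
  have "(LINT y|\<mu>. indicator S (Z y) * Re (h y)) = (LINT y|\<nu>. indicator S (Z y) * Re (h y))"
    and "(LINT y|\<mu>. indicator S (Z y) * Im (h y)) = (LINT y|\<nu>. indicator S (Z y) * Im (h y))"
    using fin sets Z h ch ch_h ch_cnj S Re_Im_bound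
    by (intro integral_indicator_eq_if_char_eq; simp add: Re_Im)+
  moreover have "Re (CLINT y|M. indicator S (Z y) * h y) = (LINT y|M. indicator S (Z y) * Re (h y))"
    and "Im (CLINT y|M. indicator S (Z y) * h y) = (LINT y|M. indicator S (Z y) * Im (h y))"
    if M: "finite_measure M" "Z \<in> borel_measurable M" "h \<in> borel_measurable M" for M
  proof -
    have "integrable M (\<lambda>y. indicator S (Z y) * h y)"
      using h(2) S M
      by (auto intro!: finite_measure.integrable_const_bound[where B=1] simp: indicator_def)
    moreover have "Re (indicator S x * z) = indicator S x * Re z"
      "Im (indicator S x * z) = indicator S x * Im z"
      for x and z :: complex
      by (simp_all add: indicator_def)
    ultimately show "Re (CLINT y|M. indicator S (Z y) * h y)
        = (LINT y|M. indicator S (Z y) * Re (h y))"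
      and "Im (CLINT y|M. indicator S (Z y) * h y) = (LINT y|M. indicator S (Z y) * Im (h y))"
      by (simp_all add: integral_Re[symmetric] integral_Im[symmetric] del: integral_Re integral_Im)
  qed
  ultimately show ?thesis
    using fin Z h by (simp add: complex_eq_iff)
qed

definition restricted_marginal ::
  "('i \<Rightarrow> real) measure \<Rightarrow> 'i \<Rightarrow> real set \<Rightarrow> 'i set \<Rightarrow> ('i \<Rightarrow> real) measure"
  where "restricted_marginal M j S I =
    distr (density M (\<lambda>y. indicator S (y j))) (PiM I (\<lambda>_. borel)) (\<lambda>y. restrict y I)"

lemma sets_restricted_marginal [simp]:
  "sets (restricted_marginal M j S I) = sets (PiM I (\<lambda>_. borel))"
  by (simp add: restricted_marginal_def)

lemma measurable_restrict_insert:
  "sets M = sets (PiM (insert j I) (\<lambda>_. borel :: real measure)) \<Longrightarrow>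
    (\<lambda>y. restrict y I) \<in> M \<rightarrow>\<^sub>M PiM I (\<lambda>_. borel)"
  by (subst measurable_cong_sets[OF _ refl], assumption) (rule measurable_restrict_subset, auto)

lemma finite_measure_restricted_marginal:
  assumes "finite_measure M" "sets M = sets (PiM (insert j I) (\<lambda>_. borel :: real measure))"
    and "S \<in> sets borel"
  shows "finite_measure (restricted_marginal M j S I)"
  unfolding restricted_marginal_def using assms measurable_restrict_insert[OF assms(2)]
  by (intro finite_measure.finite_measure_distr finite_measure_density_bounded[where C=1])
    (auto simp: indicator_def measurable_cong_sets[OF assms(2) refl])

lemma char_restricted_marginal:
  assumes M: "sets M = sets (PiM (insert j I) (\<lambda>_. borel :: real measure))" and S: "S \<in> sets borel"
  shows "(CLINT x|restricted_marginal M j S I. cis (\<Sum>i\<in>I. t i * x i))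
    = (CLINT y|M. indicator S (y j) * cis (\<Sum>i\<in>I. t i * y i))"
proof -
  have [measurable]: "(\<lambda>y. y i) \<in> borel_measurable M" if "i \<in> insert j I" for i
    using that by (simp add: measurable_cong_sets[OF M refl])
  have "(CLINT x|restricted_marginal M j S I. cis (\<Sum>i\<in>I. t i * x i))
      = (CLINT y|density M (\<lambda>y. indicator S (y j)). cis (\<Sum>i\<in>I. t i * restrict y I i))"
    unfolding restricted_marginal_def
    by (intro integral_distr measurable_restrict_insert) (simp_all add: M)
  also have "\<dots> = (CLINT y|M. indicator S (y j) *\<^sub>R cis (\<Sum>i\<in>I. t i * restrict y I i))"
    using S by (subst integral_density[symmetric]) (auto simp: ennreal_indicator)
  also have "\<dots> = (CLINT y|M. indicator S (y j) * cis (\<Sum>i\<in>I. t i * y i))"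
    by (intro Bochner_Integration.integral_cong)
      (auto simp: scaleR_conv_of_real indicator_def intro!: arg_cong[where f=cis] sum.cong)
  finally show ?thesis .
qed

lemma emeasure_restricted_marginal_PiE:
  assumes I: "finite I" "j \<notin> I"
    and M: "sets M = sets (PiM (insert j I) (\<lambda>_. borel :: real measure))"
    and A: "\<And>i. i \<in> insert j I \<Longrightarrow> A i \<in> sets borel"
  shows "emeasure (restricted_marginal M j (A j) I) (Pi\<^sub>E I A) = emeasure M (Pi\<^sub>E (insert j I) A)"
proof -
  have [measurable]: "(\<lambda>y. y j) \<in> borel_measurable M"
    by (simp add: measurable_cong_sets[OF M refl])
  have PI: "Pi\<^sub>E I A \<in> sets (PiM I (\<lambda>_. borel :: real measure))"
    using A I by (intro sets_PiM_I_finite) auto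
  have PI': "Pi\<^sub>E (insert j I) A \<in> sets M"
    unfolding M using A I by (intro sets_PiM_I_finite) auto
  have sp: "space M = space (PiM (insert j I) (\<lambda>_. borel :: real measure))"
    using sets_eq_imp_space_eq[OF M] .
  have "emeasure (restricted_marginal M j (A j) I) (Pi\<^sub>E I A)
      = emeasure (density M (\<lambda>y. indicator (A j) (y j))) ((\<lambda>y. restrict y I) -` Pi\<^sub>E I A \<inter> space M)"
    unfolding restricted_marginal_def
    by (subst emeasure_distr[OF _ PI]) (use measurable_restrict_insert[OF M] in auto)
  also have "\<dots> = (\<integral>\<^sup>+y. indicator (A j) (y j)
      * indicator ((\<lambda>y. restrict y I) -` Pi\<^sub>E I A \<inter> space M) y \<partial>M)"
    using measurable_restrict_insert[OF M] PI A
    by (subst emeasure_density) (auto intro!: measurable_sets)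
  also have "\<dots> = (\<integral>\<^sup>+y. indicator (Pi\<^sub>E (insert j I) A) y \<partial>M)"
    using sp I by (intro nn_integral_cong)
      (auto simp: indicator_def space_PiM PiE_iff extensional_def restrict_def)
  also have "\<dots> = emeasure M (Pi\<^sub>E (insert j I) A)"
    using PI' by simp
  finally show ?thesis .
qed

lemma integral_indicator_cis_eq_if_char_eq:
  fixes \<mu> \<nu> :: "('i \<Rightarrow> real) measure"
  assumes I: "finite I" "j \<notin> I" and fin: "finite_measure \<mu>" "finite_measure \<nu>"
    and sets: "sets \<mu> = sets (PiM (insert j I) (\<lambda>_. borel))"
      "sets \<nu> = sets (PiM (insert j I) (\<lambda>_. borel))"
    and ch: "\<And>t. (CLINT y|\<mu>. cis (\<Sum>i\<in>insert j I. t i * y i))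
        = (CLINT y|\<nu>. cis (\<Sum>i\<in>insert j I. t i * y i))"
    and S: "S \<in> sets borel"
  shows "(CLINT y|\<mu>. indicator S (y j) * cis (\<Sum>i\<in>I. s i * y i))
    = (CLINT y|\<nu>. indicator S (y j) * cis (\<Sum>i\<in>I. s i * y i))"
proof -
  have cis_insert: "cis (t * y j) * cis (\<Sum>i\<in>I. s i * y i)
      = cis (\<Sum>i\<in>insert j I. (s(j := t)) i * y i)"
    for s t and y :: "'i \<Rightarrow> real"
    using I by (simp add: cis_mult)
      (intro arg_cong[where f=cis] arg_cong2[where f="(+)"] sum.cong, auto)
  have cis_insert_neg: "cis (t * y j) * cis (- (\<Sum>i\<in>I. s i * y i))
      = cis (\<Sum>i\<in>insert j I. ((\<lambda>i. - s i)(j := t)) i * y i)" for s t and y :: "'i \<Rightarrow> real"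
    using cis_insert[of t y "\<lambda>i. - s i"] by (simp add: sum_negf)
  have [measurable]: "(\<lambda>y. y i) \<in> borel_measurable \<mu>" if "i \<in> insert j I" for i
    using that by (simp add: measurable_cong_sets[OF sets(1) refl])
  have "(\<lambda>y. cis (\<Sum>i\<in>I. s i * y i)) \<in> borel_measurable \<mu>"
    by measurable
  moreover have "(CLINT y|\<mu>. cis (t * y j)) = (CLINT y|\<nu>. cis (t * y j))" for t
    using ch[of "(\<lambda>_. 0)(j := t)"] cis_insert[of t _ "\<lambda>_. 0"] by simp
  ultimately show ?thesis
    using fin sets S ch
    by (intro integral_indicator_eq_if_char_eq_complex)
      (simp_all add: cis_insert cis_insert_neg cis_cnj)
qed

text \<open>Induction on \<open>I\<close>: by the one-dimensional case in the coordinate \<open>j\<close>, the characteristic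
  functions of the measures \<open>restricted_marginal\<close> agree, and these measures determine
  \<open>\<mu>\<close> on boxes.\<close>

lemma PiM_real_eq_if_char_eq:
  fixes \<mu> \<nu> :: "('i \<Rightarrow> real) measure"
  assumes "finite I" "finite_measure \<mu>" "finite_measure \<nu>"
    and "sets \<mu> = sets (PiM I (\<lambda>_. borel))" "sets \<nu> = sets (PiM I (\<lambda>_. borel))"
    and "\<And>t. (CLINT y|\<mu>. cis (\<Sum>i\<in>I. t i * y i)) = (CLINT y|\<nu>. cis (\<Sum>i\<in>I. t i * y i))"
  shows "\<mu> = \<nu>"
  using assms
proof (induction I arbitrary: \<mu> \<nu> rule: finite_induct)
  case empty
  have "complex_of_real (measure \<mu> (space \<mu>)) = complex_of_real (measure \<nu> (space \<nu>))"
    using empty.prems(5)[of "\<lambda>_. 0"] by simp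
  moreover have "Pi\<^sub>E {} A = space \<mu>" "Pi\<^sub>E {} A = space \<nu>" for A :: "'i \<Rightarrow> real set"
    using sets_eq_imp_space_eq[OF empty.prems(3)] sets_eq_imp_space_eq[OF empty.prems(4)]
    by (auto simp: space_PiM)
  ultimately show "\<mu> = \<nu>"
    using empty.prems by (intro finite_measure_eqI_PiM[of "{}"])
      (auto simp: finite_measure.emeasure_eq_measure)
next
  case (insert j I)
  have marginal_eq: "restricted_marginal \<mu> j S I = restricted_marginal \<nu> j S I"
    if S: "S \<in> sets borel" for S
  proof (rule insert.IH)
    show "finite_measure (restricted_marginal \<mu> j S I)"
      "finite_measure (restricted_marginal \<nu> j S I)"
      using insert.prems S by (simp_all add: finite_measure_restricted_marginal)
    fix t
    show "(CLINT y|restricted_marginal \<mu> j S I. cis (\<Sum>i\<in>I. t i * y i))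
        = (CLINT y|restricted_marginal \<nu> j S I. cis (\<Sum>i\<in>I. t i * y i))"
      unfolding char_restricted_marginal[OF insert.prems(3) S]
        char_restricted_marginal[OF insert.prems(4) S]
      by (rule integral_indicator_cis_eq_if_char_eq[OF insert.hyps insert.prems S])
  qed simp_all
  show "\<mu> = \<nu>"
  proof (intro finite_measure_eqI_PiM[of "insert j I"])
    fix A :: "'i \<Rightarrow> real set" assume A: "\<And>i. i \<in> insert j I \<Longrightarrow> A i \<in> sets borel"
    have "emeasure \<mu> (Pi\<^sub>E (insert j I) A) = emeasure (restricted_marginal \<mu> j (A j) I) (Pi\<^sub>E I A)"
      using emeasure_restricted_marginal_PiE[of I j \<mu> A] insert A by simp
    also have "\<dots> = emeasure (restricted_marginal \<nu> j (A j) I) (Pi\<^sub>E I A)"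
      using marginal_eq A by simp
    also have "\<dots> = emeasure \<nu> (Pi\<^sub>E (insert j I) A)"
      using emeasure_restricted_marginal_PiE[of I j \<nu> A] insert A by simp
    finally show "emeasure \<mu> (Pi\<^sub>E (insert j I) A) = emeasure \<nu> (Pi\<^sub>E (insert j I) A)" .
  qed (use insert in auto)
qed

definition re_im_coords :: "'i set \<Rightarrow> ('i \<Rightarrow> complex) \<Rightarrow> 'i \<times> bool \<Rightarrow> real"
  where "re_im_coords J y = (\<lambda>p\<in>J \<times> UNIV. if snd p then Re (y (fst p)) else Im (y (fst p)))"

definition complex_of_coords :: "'i set \<Rightarrow> ('i \<times> bool \<Rightarrow> real) \<Rightarrow> 'i \<Rightarrow> complex"
  where "complex_of_coords J x = (\<lambda>i\<in>J. Complex (x (i, True)) (x (i, False)))"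

lemma measurable_re_im_coords:
  "re_im_coords J \<in> PiM J (\<lambda>_. borel :: complex measure) \<rightarrow>\<^sub>M PiM (J \<times> UNIV) (\<lambda>_. borel)"
  unfolding re_im_coords_def
proof (rule measurable_restrict)
  fix p :: "_ \<times> bool" assume "p \<in> J \<times> UNIV"
  then have "(\<lambda>y. y (fst p)) \<in> PiM J (\<lambda>_. borel :: complex measure) \<rightarrow>\<^sub>M borel"
    by (intro measurable_component_singleton) auto
  then show "(\<lambda>y. if snd p then Re (y (fst p)) else Im (y (fst p)))
      \<in> borel_measurable (PiM J (\<lambda>_. borel))"
    by (cases "snd p") (simp_all, measurable)
qed

lemma measurable_complex_of_coords:
  "complex_of_coords J \<in> PiM (J \<times> UNIV) (\<lambda>_. borel) \<rightarrow>\<^sub>M PiM J (\<lambda>_. borel :: complex measure)"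
  unfolding complex_of_coords_def
proof (rule measurable_restrict)
  fix i assume "i \<in> J"
  then have "(\<lambda>x. x (i, b)) \<in> borel_measurable (PiM (J \<times> UNIV) (\<lambda>_. borel :: real measure))" for b
    by (intro measurable_component_singleton) auto
  then have "(\<lambda>x. complex_of_real (x (i, True)) + \<i> * complex_of_real (x (i, False)))
      \<in> borel_measurable (PiM (J \<times> UNIV) (\<lambda>_. borel))"
    by measurable
  then show "(\<lambda>x. Complex (x (i, True)) (x (i, False)))
      \<in> borel_measurable (PiM (J \<times> UNIV) (\<lambda>_. borel))"
    by (simp add: Complex_eq)
qed

lemma complex_of_coords_re_im_coords:
  "y \<in> space (PiM J (\<lambda>_. borel :: complex measure)) \<Longrightarrow> complex_of_coords J (re_im_coords J y) = y"
  by (auto simp: complex_of_coords_def re_im_coords_def space_PiM PiE_iff extensional_def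
      complex_eq_iff fun_eq_iff)

lemma sum_mult_re_im_coords:
  "(\<Sum>p\<in>J \<times> UNIV. t p * re_im_coords J y p)
      = (\<Sum>i\<in>J. Re (cnj (Complex (t (i, True)) (t (i, False))) * y i))"
proof -
  have "(\<Sum>p\<in>J \<times> UNIV. t p * re_im_coords J y p)
      = (\<Sum>i\<in>J. \<Sum>b\<in>UNIV. t (i, b) * re_im_coords J y (i, b))"
    by (subst sum.cartesian_product) simp
  also have "\<dots> = (\<Sum>i\<in>J. Re (cnj (Complex (t (i, True)) (t (i, False))) * y i))"
    by (intro sum.cong) (auto simp: re_im_coords_def UNIV_bool)
  finally show ?thesis .
qed

lemma PiM_complex_eq_if_char_eq:
  fixes J :: "'i set" and \<mu> \<nu> :: "('i \<Rightarrow> complex) measure"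
  assumes J: "finite J" and fin: "finite_measure \<mu>" "finite_measure \<nu>"
    and sets: "sets \<mu> = sets (PiM J (\<lambda>_. borel))" "sets \<nu> = sets (PiM J (\<lambda>_. borel))"
    and ch: "\<And>t. (CLINT y|\<mu>. cis (\<Sum>i\<in>J. Re (cnj (t i) * y i)))
        = (CLINT y|\<nu>. cis (\<Sum>i\<in>J. Re (cnj (t i) * y i)))"
  shows "\<mu> = \<nu>"
proof -
  let ?C = "PiM J (\<lambda>_. borel :: complex measure)"
    and ?R = "PiM (J \<times> UNIV) (\<lambda>_. borel :: real measure)"
  have re_im: "re_im_coords J \<in> \<mu> \<rightarrow>\<^sub>M ?R" "re_im_coords J \<in> \<nu> \<rightarrow>\<^sub>M ?R"
    using measurable_re_im_coords
    by (simp_all add: measurable_cong_sets[OF sets(1) refl] measurable_cong_sets[OF sets(2) refl])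
  have "distr \<mu> ?R (re_im_coords J) = distr \<nu> ?R (re_im_coords J)"
  proof (rule PiM_real_eq_if_char_eq)
    fix t :: "'i \<times> bool \<Rightarrow> real"
    have "(\<lambda>x. cis (\<Sum>p\<in>J \<times> UNIV. t p * x p)) \<in> borel_measurable ?R"
      by measurable
    then show "(CLINT y|distr \<mu> ?R (re_im_coords J). cis (\<Sum>p\<in>J \<times> UNIV. t p * y p))
        = (CLINT y|distr \<nu> ?R (re_im_coords J). cis (\<Sum>p\<in>J \<times> UNIV. t p * y p))"
      using ch[of "\<lambda>i. Complex (t (i, True)) (t (i, False))"] re_im
      by (simp add: integral_distr sum_mult_re_im_coords)
  qed (use J fin re_im in \<open>auto intro: finite_measure.finite_measure_distr\<close>)
  moreover have "distr (distr M ?R (re_im_coords J)) ?C (complex_of_coords J) = M"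
    if M: "sets M = sets ?C" for M
  proof -
    have "distr (distr M ?R (re_im_coords J)) ?C (complex_of_coords J) = distr M ?C (\<lambda>x. x)"
      using measurable_re_im_coords measurable_complex_of_coords complex_of_coords_re_im_coords
        sets_eq_imp_space_eq[OF M]
      by (subst distr_distr) (auto simp: measurable_cong_sets[OF M refl] intro!: distr_cong)
    also have "\<dots> = M"
      using M by (intro distr_id2) simp
    finally show ?thesis .
  qed
  ultimately show ?thesis
    using sets by metis
qed

lemma emeasure_distr_prod_emb:
  fixes f :: "'a \<Rightarrow> 'i \<Rightarrow> 'b"
  assumes F: "(\<lambda>\<omega>. \<lambda>z\<in>U. f \<omega> z) \<in> M \<rightarrow>\<^sub>M PiM U (\<lambda>_. N)" and J: "J \<subseteq> U"
    and X: "X \<in> sets (PiM J (\<lambda>_. N))"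
  shows "emeasure (distr M (PiM U (\<lambda>_. N)) (\<lambda>\<omega>. \<lambda>z\<in>U. f \<omega> z)) (prod_emb U (\<lambda>_. N) J X)
       = emeasure (distr M (PiM J (\<lambda>_. N)) (\<lambda>\<omega>. \<lambda>z\<in>J. f \<omega> z)) X"
proof -
  have FJ: "(\<lambda>\<omega>. \<lambda>z\<in>J. f \<omega> z) \<in> M \<rightarrow>\<^sub>M PiM J (\<lambda>_. N)"
  proof -
    have "(\<lambda>\<omega>. restrict (\<lambda>z\<in>U. f \<omega> z) J) \<in> M \<rightarrow>\<^sub>M PiM J (\<lambda>_. N)"
      by (rule measurable_compose[OF F measurable_restrict_subset[OF J]])
    moreover have "(\<lambda>\<omega>. restrict (\<lambda>z\<in>U. f \<omega> z) J) = (\<lambda>\<omega>. \<lambda>z\<in>J. f \<omega> z)"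
      using J by (auto simp: restrict_def fun_eq_iff)
    ultimately show ?thesis by simp
  qed
  have sp: "\<And>\<omega>. \<omega> \<in> space M \<Longrightarrow> (\<lambda>z\<in>U. f \<omega> z) \<in> space (PiM U (\<lambda>_. N))"
    using F by (auto dest: measurable_space)
  have pre: "(\<lambda>\<omega>. \<lambda>z\<in>U. f \<omega> z) -` prod_emb U (\<lambda>_. N) J X \<inter> space M
      = (\<lambda>\<omega>. \<lambda>z\<in>J. f \<omega> z) -` X \<inter> space M"
  proof -
    have "restrict (\<lambda>z\<in>U. f \<omega> z) J = (\<lambda>z\<in>J. f \<omega> z)" for \<omega>
      using J by (auto simp: restrict_def fun_eq_iff)
    then show ?thesis using sp by (auto simp: prod_emb_iff space_PiM PiE_iff)
  qed
  show ?thesis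
    using F FJ X J by (simp add: emeasure_distr pre)
qed

lemma distr_PiM_AE_cong:
  assumes J: "finite J"
    and X: "\<And>w. w \<in> J \<Longrightarrow> (\<lambda>\<omega>. X \<omega> w) \<in> M \<rightarrow>\<^sub>M N"
    and Y: "\<And>w. w \<in> J \<Longrightarrow> (\<lambda>\<omega>. Y \<omega> w) \<in> M \<rightarrow>\<^sub>M N"
    and AE_eq: "\<And>w. w \<in> J \<Longrightarrow> AE \<omega> in M. X \<omega> w = Y \<omega> w"
  shows "distr M (PiM J (\<lambda>_. N)) (\<lambda>\<omega>. \<lambda>w\<in>J. X \<omega> w) = distr M (PiM J (\<lambda>_. N)) (\<lambda>\<omega>. \<lambda>w\<in>J. Y \<omega> w)"
proof (rule distr_cong_AE[OF refl refl])
  have "AE \<omega> in M. \<forall>w\<in>J. X \<omega> w = Y \<omega> w"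
    using J AE_eq by (subst AE_finite_all) auto
  then show "AE \<omega> in M. (\<lambda>w\<in>J. X \<omega> w) = (\<lambda>w\<in>J. Y \<omega> w)"
    by eventually_elim (auto simp: restrict_def fun_eq_iff)
qed (use X Y in \<open>auto intro!: measurable_restrict\<close>)

lemma distr_PiM_eq_if_finite_marginals_eq:
  fixes X Y :: "'a \<Rightarrow> 'i \<Rightarrow> 'b"
  assumes M: "finite_measure M"
    and X: "(\<lambda>\<omega>. \<lambda>z\<in>U. X \<omega> z) \<in> M \<rightarrow>\<^sub>M PiM U (\<lambda>_. N)"
    and Y: "(\<lambda>\<omega>. \<lambda>z\<in>U. Y \<omega> z) \<in> M \<rightarrow>\<^sub>M PiM U (\<lambda>_. N)"
    and marginals: "\<And>J. finite J \<Longrightarrow> J \<subseteq> U \<Longrightarrow>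
      distr M (PiM J (\<lambda>_. N)) (\<lambda>\<omega>. \<lambda>z\<in>J. X \<omega> z) = distr M (PiM J (\<lambda>_. N)) (\<lambda>\<omega>. \<lambda>z\<in>J. Y \<omega> z)"
  shows "distr M (PiM U (\<lambda>_. N)) (\<lambda>\<omega>. \<lambda>z\<in>U. X \<omega> z) = distr M (PiM U (\<lambda>_. N)) (\<lambda>\<omega>. \<lambda>z\<in>U. Y \<omega> z)"
proof (rule measure_eqI_PiM_infinite)
  show "finite_measure (distr M (PiM U (\<lambda>_. N)) (\<lambda>\<omega>. \<lambda>z\<in>U. X \<omega> z))"
    by (rule finite_measure.finite_measure_distr[OF M X])
  fix A J assume J: "finite J" "J \<subseteq> U" and A: "\<And>i. i \<in> J \<Longrightarrow> A i \<in> sets N"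
  then have box: "Pi\<^sub>E J A \<in> sets (PiM J (\<lambda>_. N))"
    by (intro sets_PiM_I_finite) auto
  show "emeasure (distr M (PiM U (\<lambda>_. N)) (\<lambda>\<omega>. \<lambda>z\<in>U. X \<omega> z)) (prod_emb U (\<lambda>_. N) J (Pi\<^sub>E J A))
      = emeasure (distr M (PiM U (\<lambda>_. N)) (\<lambda>\<omega>. \<lambda>z\<in>U. Y \<omega> z)) (prod_emb U (\<lambda>_. N) J (Pi\<^sub>E J A))"
    unfolding emeasure_distr_prod_emb[OF X J(2) box] emeasure_distr_prod_emb[OF Y J(2) box]
      marginals[OF J] ..
qed simp_all

section \<open>The standard complex Gaussian\<close>

lemma measurable_pair_Complex [measurable]:
  "(\<lambda>(x, y). Complex x y) \<in> (M1 \<Otimes>\<^sub>M M2) \<rightarrow>\<^sub>M borel"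
  if "sets M1 = sets borel" "sets M2 = sets borel"
proof -
  have "(\<lambda>p::real \<times> real. complex_of_real (fst p) + \<i> * complex_of_real (snd p))
      \<in> borel_measurable (M1 \<Otimes>\<^sub>M M2)"
    using that by measurable
  then show ?thesis
    by (simp add: case_prod_beta Complex_eq)
qed

lemma distr_pair_lborel_Complex:
  "distr (lborel \<Otimes>\<^sub>M lborel) borel (\<lambda>(x, y). Complex x y) = (lborel :: complex measure)"
proof (rule lborel_eqI[symmetric])
  fix l u :: complex
  assume le: "\<And>b. b \<in> Basis \<Longrightarrow> l \<bullet> b \<le> u \<bullet> b"
  then have le1: "Re l \<le> Re u" and le2: "Im l \<le> Im u"
    using le[of 1] le[of \<i>] by (auto simp: Basis_complex_def inner_complex_def)
  have pre: "(\<lambda>(x, y). Complex x y) -` box l u \<inter> space (lborel \<Otimes>\<^sub>M lborel)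
      = box (Re l, Im l) (Re u, Im u)"
    by (auto simp: box_def Basis_complex_def Basis_prod_def inner_complex_def inner_prod_def
        space_pair_measure)
  have "emeasure (distr (lborel \<Otimes>\<^sub>M lborel) borel (\<lambda>(x, y). Complex x y)) (box l u)
      = emeasure (lborel \<Otimes>\<^sub>M lborel) (box (Re l, Im l) (Re u, Im u))"
    by (subst emeasure_distr) (auto simp: pre)
  also have "\<dots> = emeasure (lborel :: (real \<times> real) measure) (box (Re l, Im l) (Re u, Im u))"
    by (simp add: lborel_prod)
  also have "\<dots> = ennreal ((Re u - Re l) * (Im u - Im l))"
    using le1 le2 by (simp add: emeasure_lborel_box_eq Basis_prod_def inner_prod_def)
  also have "\<dots> = ennreal (\<Prod>b\<in>Basis. (u - l) \<bullet> b)"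
    by (simp add: Basis_complex_def inner_complex_def)
  finally show "emeasure (distr (lborel \<Otimes>\<^sub>M lborel) borel (\<lambda>(x, y). Complex x y)) (box l u)
      = ennreal (\<Prod>b\<in>Basis. (u - l) \<bullet> b)" .
qed simp

lemma normal_density_half_variance:
  "normal_density 0 (1 / sqrt 2) x = exp (- (x * x)) / sqrt pi"
  by (simp add: normal_density_def power_divide power2_eq_square)

lemma density_normal_half_variance:
  "density lborel (normal_density 0 (1 / sqrt 2))
      = distr std_normal_distribution borel (\<lambda>u. u / sqrt 2)"
proof -
  let ?T = "\<lambda>u::real. u / sqrt 2"
  let ?g = "normal_density 0 (1 / sqrt 2)"
  have "std_normal_density x = ?g (?T x) / sqrt 2" for x
  proof -
    have "sqrt (2 * pi) = sqrt 2 * sqrt pi" by (simp add: real_sqrt_mult)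
    moreover have "- (x / sqrt 2 * (x / sqrt 2)) = - x\<^sup>2 / 2"
      by (simp add: power2_eq_square)
    ultimately show ?thesis
      unfolding normal_density_half_variance std_normal_density_def by (simp add: field_simps)
  qed
  then have "distr std_normal_distribution borel ?T
      = density (distr lborel borel ?T) (\<lambda>x. ennreal (?g x / sqrt 2))"
    by (subst density_distr) auto
  also have "\<dots> = density (density (distr lborel borel ?T) (\<lambda>_. ennreal (1 / sqrt 2))) ?g"
    by (subst density_density_eq)
      (auto simp: ennreal_mult''[symmetric] mult.commute intro!: arg_cong2[where f=density])
  also have "density (distr lborel borel ?T) (\<lambda>_. ennreal (1 / sqrt 2)) = lborel"
    using lborel_real_affine[of "1 / sqrt 2" 0] by simp
  finally show ?thesis ..
qed

abbreviation std_normal_pair :: "(real \<times> real) measure"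
  where "std_normal_pair \<equiv> std_normal_distribution \<Otimes>\<^sub>M std_normal_distribution"

definition complex_of_normal_pair :: "real \<times> real \<Rightarrow> complex"
  where "complex_of_normal_pair p = Complex (fst p / sqrt 2) (snd p / sqrt 2)"

lemma complex_of_normal_pair_eq:
  "complex_of_normal_pair = (\<lambda>p. complex_of_real (fst p / sqrt 2) + \<i>
      * complex_of_real (snd p / sqrt 2))"
  by (simp add: complex_of_normal_pair_def complex_eq_iff fun_eq_iff)

lemma complex_of_normal_pair_measurable [measurable]:
  "complex_of_normal_pair \<in> borel_measurable (M1 \<Otimes>\<^sub>M M2)"
  if "sets M1 = sets borel" "sets M2 = sets borel"
  unfolding complex_of_normal_pair_eq using that by measurable

interpretation std_normal: prob_space std_normal_distribution
  by (rule prob_space_normal_density) simp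

interpretation std_normal_pair: pair_prob_space std_normal_distribution std_normal_distribution ..

lemma borel_measurable_std_cgauss_density [measurable]:
  "std_cgauss_density \<in> borel_measurable borel"
  unfolding std_cgauss_density_def by measurable

lemma std_cgauss_eq_distr_normal_pair:
  "density lborel std_cgauss_density = distr std_normal_pair borel complex_of_normal_pair"
proof -
  let ?C = "\<lambda>(x, y). Complex x y"
  let ?T = "\<lambda>u::real. u / sqrt 2"
  let ?g = "\<lambda>x. ennreal (normal_density 0 (1 / sqrt 2) x)"
  have "std_cgauss_density (Complex x y) = ?g x * ?g y" for x y
  proof -
    have "norm (Complex x y) * norm (Complex x y) = x * x + y * y"
      by (simp add: cmod_def power2_eq_square[symmetric])
    then show ?thesis
      unfolding std_cgauss_density_def normal_density_half_variance
      by (simp add: ennreal_mult''[symmetric] exp_add[symmetric] field_simps)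
  qed
  then have density_Complex: "(\<lambda>p. std_cgauss_density (?C p)) = (\<lambda>(x, y). ?g x * ?g y)"
    by auto
  have sf: "sigma_finite_measure (density lborel ?g)"
    by (rule prob_space_imp_sigma_finite, rule prob_space_normal_density) simp
  have "density lborel std_cgauss_density
      = density (distr (lborel \<Otimes>\<^sub>M lborel) borel ?C) std_cgauss_density"
    by (simp add: distr_pair_lborel_Complex)
  also have "\<dots> = distr (density (lborel \<Otimes>\<^sub>M lborel) (\<lambda>p. std_cgauss_density (?C p))) borel ?C"
    by (rule density_distr) simp_all
  also have "density (lborel \<Otimes>\<^sub>M lborel) (\<lambda>p. std_cgauss_density (?C p))
      = density lborel ?g \<Otimes>\<^sub>M density lborel ?g"
    unfolding density_Complex
    by (rule pair_measure_density[symmetric]) (auto simp: sf lborel.sigma_finite_measure_axioms)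
  also have "\<dots> = distr std_normal_distribution borel ?T \<Otimes>\<^sub>M distr std_normal_distribution borel ?T"
    by (simp add: density_normal_half_variance)
  also have "\<dots> = distr std_normal_pair (borel \<Otimes>\<^sub>M borel) (\<lambda>(x, y). (?T x, ?T y))"
    by (rule pair_measure_distr) (auto simp: density_normal_half_variance[symmetric] sf)
  also have "distr \<dots> borel ?C = distr std_normal_pair borel (?C \<circ> (\<lambda>(x, y). (?T x, ?T y)))"
    by (rule distr_distr) simp_all
  also have "?C \<circ> (\<lambda>(x, y). (?T x, ?T y)) = complex_of_normal_pair"
    by (auto simp: complex_of_normal_pair_def fun_eq_iff)
  finally show ?thesis .
qed

lemma std_normal_pair_integral_product:
  fixes A B :: "real \<Rightarrow> 'b::{real_normed_field, banach, second_countable_topology}"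
  assumes A: "integrable std_normal_distribution A" and B: "integrable std_normal_distribution B"
  shows "integrable std_normal_pair (\<lambda>p. A (fst p) * B (snd p))"
    and "integral\<^sup>L std_normal_pair (\<lambda>p. A (fst p) * B (snd p))
      = integral\<^sup>L std_normal_distribution A * integral\<^sup>L std_normal_distribution B"
proof -
  have [measurable]: "A \<in> borel_measurable borel" "B \<in> borel_measurable borel"
    using borel_measurable_integrable[OF A] borel_measurable_integrable[OF B] by simp_all
  show int: "integrable std_normal_pair (\<lambda>p. A (fst p) * B (snd p))"
  proof (rule std_normal_pair.Fubini_integrable)
    have "integrable std_normal_distribution
        (\<lambda>x. norm (A x) * (LINT y|std_normal_distribution. norm (B y)))"
      using A by (intro integrable_mult_left integrable_norm)
    then show "integrable std_normal_distribution
        (\<lambda>x. LINT y|std_normal_distribution. norm (A (fst (x, y)) * B (snd (x, y))))"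
      by (simp add: norm_mult)
    show "AE x in std_normal_distribution. integrable std_normal_distribution
        (\<lambda>y. A (fst (x, y)) * B (snd (x, y)))"
      using B by (auto intro!: integrable_mult_right)
  qed measurable
  have "integral\<^sup>L std_normal_pair (\<lambda>p. A (fst p) * B (snd p))
      = (\<integral>x. \<integral>y. A (fst (x, y)) * B (snd (x, y)) \<partial>std_normal_distribution \<partial>std_normal_distribution)"
    by (rule std_normal_pair.integral_fst'[OF int, symmetric])
  then show "integral\<^sup>L std_normal_pair (\<lambda>p. A (fst p) * B (snd p))
      = integral\<^sup>L std_normal_distribution A * integral\<^sup>L std_normal_distribution B"
    by simp
qed

lemma std_cgauss_integral_transfer:
  fixes h :: "complex \<Rightarrow> 'b::{banach, second_countable_topology}"
  assumes X: "distributed M lborel X std_cgauss_density" and h: "h \<in> borel_measurable borel"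
  shows "integral\<^sup>L M (\<lambda>\<omega>. h (X \<omega>)) = integral\<^sup>L std_normal_pair (\<lambda>p. h (complex_of_normal_pair p))"
    and "integrable M (\<lambda>\<omega>. h (X \<omega>)) \<longleftrightarrow> integrable std_normal_pair (\<lambda>p. h (complex_of_normal_pair p))"
proof -
  have mX: "X \<in> M \<rightarrow>\<^sub>M lborel" using X by (simp add: distributed_def)
  have law: "distr M lborel X = distr std_normal_pair borel complex_of_normal_pair"
    using X by (simp add: distributed_def std_cgauss_eq_distr_normal_pair)
  have "integral\<^sup>L M (\<lambda>\<omega>. h (X \<omega>)) = integral\<^sup>L (distr M lborel X) h"
    using mX h by (simp add: integral_distr)
  also have "\<dots> = integral\<^sup>L std_normal_pair (\<lambda>p. h (complex_of_normal_pair p))"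
    using h by (simp add: law integral_distr)
  finally show "integral\<^sup>L M (\<lambda>\<omega>. h (X \<omega>))
      = integral\<^sup>L std_normal_pair (\<lambda>p. h (complex_of_normal_pair p))" .
  have "integrable M (\<lambda>\<omega>. h (X \<omega>)) \<longleftrightarrow> integrable (distr M lborel X) h"
    using mX h by (simp add: integrable_distr_eq)
  also have "\<dots> \<longleftrightarrow> integrable std_normal_pair (\<lambda>p. h (complex_of_normal_pair p))"
    using h by (simp add: law integrable_distr_eq)
  finally show "integrable M (\<lambda>\<omega>. h (X \<omega>)) \<longleftrightarrow> integrable std_normal_pair
      (\<lambda>p. h (complex_of_normal_pair p))" .
qed

lemma std_cgauss_mean:
  assumes X: "distributed M lborel X std_cgauss_density"
  shows "integrable M X" and "integral\<^sup>L M X = 0"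
proof -
  let ?f = "\<lambda>x. complex_of_real (x / sqrt 2)"
  have split: "complex_of_normal_pair = (\<lambda>p. ?f (fst p) * 1 + \<i> * (1 * ?f (snd p)))"
    by (simp add: complex_of_normal_pair_eq)
  have int: "integrable std_normal_distribution ?f"
    using integrable_std_normal_distribution_moment[of 1]
    by (intro integrable_of_real integrable_divide_zero) simp
  have zero: "integral\<^sup>L std_normal_distribution ?f = 0"
    using integral_std_normal_distribution_moment_odd[of 1]
    by (simp only: integral_complex_of_real) simp
  have one: "integrable std_normal_distribution (\<lambda>_. 1 :: complex)"
    by simp
  have int1: "integrable std_normal_pair (\<lambda>p. ?f (fst p) * 1)"
    and int2: "integrable std_normal_pair (\<lambda>p. 1 * ?f (snd p))"
    by (rule std_normal_pair_integral_product(1)[OF int one],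
        rule std_normal_pair_integral_product(1)[OF one int])
  have "integrable std_normal_pair complex_of_normal_pair"
    unfolding split by (intro Bochner_Integration.integrable_add integrable_mult_right int1 int2)
  then show "integrable M X"
    using std_cgauss_integral_transfer(2)[OF X, of "\<lambda>z. z"] by simp
  have "integral\<^sup>L std_normal_pair complex_of_normal_pair
      = integral\<^sup>L std_normal_pair (\<lambda>p. ?f (fst p) * 1)
        + \<i> * integral\<^sup>L std_normal_pair (\<lambda>p. 1 * ?f (snd p))"
    unfolding split
    by (simp only: Bochner_Integration.integral_add[OF int1 integrable_mult_right[OF int2]]
        integral_mult_right_zero)
  also have "\<dots> = 0"
    unfolding std_normal_pair_integral_product(2)[OF int one]
      std_normal_pair_integral_product(2)[OF one int] zero
    by simp
  finally show "integral\<^sup>L M X = 0"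
    using std_cgauss_integral_transfer(1)[OF X, of "\<lambda>z. z"] by simp
qed

lemma std_cgauss_second_moment:
  assumes X: "distributed M lborel X std_cgauss_density"
  shows "integrable M (\<lambda>\<omega>. (cmod (X \<omega>))\<^sup>2)" and "integral\<^sup>L M (\<lambda>\<omega>. (cmod (X \<omega>))\<^sup>2) = 1"
proof -
  let ?f = "\<lambda>x::real. x * x / 2"
  have split: "(\<lambda>p. (cmod (complex_of_normal_pair p))\<^sup>2) = (\<lambda>p. ?f (fst p) * 1 + 1 * ?f (snd p))"
    unfolding cmod_power2 by (simp add: complex_of_normal_pair_def power2_eq_square fun_eq_iff)
  have int: "integrable std_normal_distribution ?f"
    using integrable_std_normal_distribution_moment[of 2] by (simp add: power2_eq_square)
  have half: "integral\<^sup>L std_normal_distribution ?f = 1 / 2"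
    using std_normal_distribution_even_moments(1)[of 1] by (simp add: power2_eq_square)
  have one: "integrable std_normal_distribution (\<lambda>_. 1 :: real)"
    by simp
  have int1: "integrable std_normal_pair (\<lambda>p. ?f (fst p) * 1)"
    and int2: "integrable std_normal_pair (\<lambda>p. 1 * ?f (snd p))"
    by (rule std_normal_pair_integral_product(1)[OF int one],
        rule std_normal_pair_integral_product(1)[OF one int])
  have "integrable std_normal_pair (\<lambda>p. (cmod (complex_of_normal_pair p))\<^sup>2)"
    unfolding split using int1 int2 by (rule Bochner_Integration.integrable_add)
  then show "integrable M (\<lambda>\<omega>. (cmod (X \<omega>))\<^sup>2)"
    using std_cgauss_integral_transfer(2)[OF X, of "\<lambda>z. (cmod z)\<^sup>2"] by simp
  have "integral\<^sup>L std_normal_pair (\<lambda>p. (cmod (complex_of_normal_pair p))\<^sup>2)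
      = integral\<^sup>L std_normal_pair (\<lambda>p. ?f (fst p) * 1) + integral\<^sup>L std_normal_pair
        (\<lambda>p. 1 * ?f (snd p))"
    unfolding split using int1 int2 by (rule Bochner_Integration.integral_add)
  also have "\<dots> = 1"
    unfolding std_normal_pair_integral_product(2)[OF int one]
      std_normal_pair_integral_product(2)[OF one int] half
    using std_normal.prob_space by simp
  finally show "integral\<^sup>L M (\<lambda>\<omega>. (cmod (X \<omega>))\<^sup>2) = 1"
    using std_cgauss_integral_transfer(1)[OF X, of "\<lambda>z. (cmod z)\<^sup>2"] by simp
qed

lemma std_cgauss_char:
  assumes X: "distributed M lborel X std_cgauss_density"
  shows "(CLINT \<omega>|M. cis (Re (cnj c * X \<omega>))) = exp (- (cmod c)\<^sup>2 / 4)"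
proof -
  let ?a = "Re c / sqrt 2" and ?b = "Im c / sqrt 2"
  have split: "(\<lambda>p. cis (Re (cnj c * complex_of_normal_pair p)))
      = (\<lambda>p. cis (?a * fst p) * cis (?b * snd p))"
    by (auto simp: complex_of_normal_pair_def cis_mult fun_eq_iff field_simps)
  have char_std_normal: "(CLINT x|std_normal_distribution. cis (t * x)) = exp (- t\<^sup>2 / 2)" for t
    using char_std_normal_distribution unfolding char_def by (simp add: cis_conv_exp fun_eq_iff)
  have int: "integrable std_normal_distribution (\<lambda>x. cis (t * x))" for t
    by (intro std_normal.integrable_const_bound[where B=1]) (auto simp: cis_conv_exp)
  have "(CLINT p|std_normal_pair. cis (Re (cnj c * complex_of_normal_pair p)))
      = (CLINT x|std_normal_distribution. cis (?a * x)) *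
        (CLINT x|std_normal_distribution. cis (?b * x))"
    unfolding split by (rule std_normal_pair_integral_product(2)[OF int int])
  also have "\<dots> = exp (- ?a\<^sup>2 / 2) * exp (- ?b\<^sup>2 / 2)"
    by (simp only: char_std_normal of_real_mult)
  also have "\<dots> = exp (- (cmod c)\<^sup>2 / 4)"
    by (simp add: cmod_power2 power_divide exp_add[symmetric] field_simps)
  finally show ?thesis
    using std_cgauss_integral_transfer(1)[OF X, of "\<lambda>z. cis (Re (cnj c * z))"] by simp
qed

section \<open>Series with i.i.d. standard complex Gaussian coefficients\<close>

lemma cis_sum: "finite I \<Longrightarrow> cis (\<Sum>i\<in>I. f i) = (\<Prod>i\<in>I. cis (f i))"
  by (induction I rule: finite_induct) (auto simp: cis_mult[symmetric])

lemma norm_sum_le_suminf_norm: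
  fixes f :: "nat \<Rightarrow> 'b::real_normed_vector"
  assumes "summable (\<lambda>k. norm (f k))" and "finite K"
  shows "norm (\<Sum>k\<in>K. f k) \<le> (\<Sum>k. norm (f k))"
proof -
  have "norm (\<Sum>k\<in>K. f k) \<le> (\<Sum>k\<in>K. norm (f k))"
    by (rule norm_sum)
  also have "\<dots> \<le> (\<Sum>k. norm (f k))"
    using assms by (intro sum_le_suminf) auto
  finally show ?thesis .
qed

lemma summable_norm_mult_cnj:
  fixes u v :: "nat \<Rightarrow> complex"
  assumes u: "summable (\<lambda>k. norm (u k))" and v: "summable (\<lambda>k. norm (v k))"
  shows "summable (\<lambda>k. norm (u k * cnj (v k)))"
proof (rule summable_comparison_test[where g="\<lambda>k. norm (u k) * (\<Sum>j. norm (v j))"])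
  show "\<exists>N. \<forall>n\<ge>N. norm (norm (u n * cnj (v n))) \<le> norm (u n) * (\<Sum>j. norm (v j))"
    using norm_sum_le_suminf_norm[OF v, of "{_}"] by (auto simp: norm_mult intro!: mult_left_mono)
  show "summable (\<lambda>k. norm (u k) * (\<Sum>j. norm (v j)))"
    using u by (rule summable_mult2)
qed

lemma summable_norm_sum_mult:
  fixes c :: "'w \<Rightarrow> complex" and u :: "'w \<Rightarrow> nat \<Rightarrow> complex"
  assumes "finite J" "\<And>w. w \<in> J \<Longrightarrow> summable (\<lambda>k. norm (u w k))"
  shows "summable (\<lambda>k. norm (\<Sum>w\<in>J. c w * u w k))"
proof (rule summable_comparison_test[where g="\<lambda>k. \<Sum>w\<in>J. norm (c w) * norm (u w k)"])
  show "\<exists>N. \<forall>n\<ge>N. norm (norm (\<Sum>w\<in>J. c w * u w n)) \<le> (\<Sum>w\<in>J. norm (c w) * norm (u w n))"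
    by (auto intro!: order.trans[OF norm_sum] simp: norm_mult)
  show "summable (\<lambda>k. \<Sum>w\<in>J. norm (c w) * norm (u w k))"
    using assms(2) by (intro summable_sum summable_mult)
qed

lemma suminf_cmod_sum_sq:
  fixes J :: "'w set" and u :: "'w \<Rightarrow> nat \<Rightarrow> complex" and t :: "'w \<Rightarrow> complex"
  assumes J: "finite J" and u: "\<And>w. w \<in> J \<Longrightarrow> summable (\<lambda>k. norm (u w k))"
  shows "complex_of_real (\<Sum>k. (cmod (\<Sum>w\<in>J. cnj (t w) * u w k))\<^sup>2)
    = (\<Sum>w\<in>J. \<Sum>w'\<in>J. cnj (t w) * t w' * (\<Sum>k. u w k * cnj (u w' k)))"
proof -
  define d where "d k = (\<Sum>w\<in>J. cnj (t w) * u w k)" for k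
  have d: "summable (\<lambda>k. norm (d k))" unfolding d_def by (rule summable_norm_sum_mult[OF J u])
  have sq: "summable (\<lambda>k. (cmod (d k))\<^sup>2)"
    using summable_norm_mult_cnj[OF d d] by (simp add: norm_mult power2_eq_square)
  have pw: "summable (\<lambda>k. u w k * cnj (u w' k))" if "w \<in> J" "w' \<in> J" for w w'
    using summable_norm_mult_cnj[OF u[OF that(1)] u[OF that(2)]] by (rule summable_norm_cancel)
  have "complex_of_real (\<Sum>k. (cmod (d k))\<^sup>2) = (\<Sum>k. complex_of_real ((cmod (d k))\<^sup>2))"
    by (rule sums_unique[OF sums_of_real[OF summable_sums[OF sq]]])
  also have "\<dots> = (\<Sum>k. \<Sum>w\<in>J. \<Sum>w'\<in>J. cnj (t w) * t w' * (u w k * cnj (u w' k)))"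
  proof (rule suminf_cong)
    fix k
    have "complex_of_real ((cmod (d k))\<^sup>2) = d k * cnj (d k)"
      by (simp add: complex_mult_cnj cmod_power2)
    also have "\<dots> = (\<Sum>w\<in>J. \<Sum>w'\<in>J. cnj (t w) * t w' * (u w k * cnj (u w' k)))"
      unfolding d_def cnj_sum sum_product by (simp add: mult_ac)
    finally show "complex_of_real ((cmod (d k))\<^sup>2)
        = (\<Sum>w\<in>J. \<Sum>w'\<in>J. cnj (t w) * t w' * (u w k * cnj (u w' k)))" .
  qed
  also have "\<dots> = (\<Sum>w\<in>J. \<Sum>k. \<Sum>w'\<in>J. cnj (t w) * t w' * (u w k * cnj (u w' k)))"
    by (rule suminf_sum) (use pw in \<open>auto intro!: summable_sum summable_mult\<close>)
  also have "\<dots> = (\<Sum>w\<in>J. \<Sum>w'\<in>J. \<Sum>k. cnj (t w) * t w' * (u w k * cnj (u w' k)))"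
    by (intro sum.cong refl suminf_sum) (use pw in \<open>auto intro!: summable_mult\<close>)
  also have "\<dots> = (\<Sum>w\<in>J. \<Sum>w'\<in>J. cnj (t w) * t w' * (\<Sum>k. u w k * cnj (u w' k)))"
    by (intro sum.cong refl suminf_mult) (use pw in auto)
  finally show ?thesis unfolding d_def .
qed

locale iid_std_cgauss = prob_space M for M :: "'a measure" +
  fixes a :: "nat \<Rightarrow> 'a \<Rightarrow> complex"
  assumes indep: "indep_vars (\<lambda>_. borel) a UNIV"
    and distributed_a: "\<And>k. distributed M lborel (a k) std_cgauss_density"
begin

lemma measurable_a [measurable]: "a k \<in> borel_measurable M"
  using distributed_measurable[OF distributed_a[of k]] by simp

lemma integrable_a: "integrable M (a k)" and integral_a: "integral\<^sup>L M (a k) = 0"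
  using std_cgauss_mean[OF distributed_a[of k]] by auto

lemma integrable_a_sq: "integrable M (\<lambda>\<omega>. (cmod (a k \<omega>))\<^sup>2)"
  and integral_a_sq: "integral\<^sup>L M (\<lambda>\<omega>. (cmod (a k \<omega>))\<^sup>2) = 1"
  using std_cgauss_second_moment[OF distributed_a[of k]] by auto

lemma char_a: "(CLINT \<omega>|M. cis (Re (cnj c * a k \<omega>))) = exp (- (cmod c)\<^sup>2 / 4)"
  using std_cgauss_char[OF distributed_a[of k]] .

lemma nn_integral_a_mult_le: "(\<integral>\<^sup>+\<omega>. ennreal (cmod (a k \<omega>) * cmod (a l \<omega>)) \<partial>M) \<le> 1"
proof -
  have "cmod z * cmod w \<le> ((cmod z)\<^sup>2 + (cmod w)\<^sup>2) / 2" for z w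
    using sum_squares_bound[of "cmod z" "cmod w"] by simp
  then have "(\<integral>\<^sup>+\<omega>. ennreal (cmod (a k \<omega>) * cmod (a l \<omega>)) \<partial>M)
      \<le> (\<integral>\<^sup>+\<omega>. ennreal (((cmod (a k \<omega>))\<^sup>2 + (cmod (a l \<omega>))\<^sup>2) / 2) \<partial>M)"
    by (intro nn_integral_mono ennreal_leI)
  also have "\<dots> = ennreal (integral\<^sup>L M (\<lambda>\<omega>. ((cmod (a k \<omega>))\<^sup>2 + (cmod (a l \<omega>))\<^sup>2) / 2))"
    using integrable_a_sq[of k] integrable_a_sq[of l]
    by (intro nn_integral_eq_integral integrable_divide_zero Bochner_Integration.integrable_add)
      auto
  also have "integral\<^sup>L M (\<lambda>\<omega>. ((cmod (a k \<omega>))\<^sup>2 + (cmod (a l \<omega>))\<^sup>2) / 2) = 1"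
    using integrable_a_sq[of k] integrable_a_sq[of l] integral_a_sq[of k] integral_a_sq[of l]
    by simp
  finally show ?thesis by simp
qed

lemma nn_integral_a_le: "(\<integral>\<^sup>+\<omega>. ennreal (cmod (a k \<omega>)) \<partial>M) \<le> 1"
proof -
  have "cmod z \<le> ((cmod z)\<^sup>2 + 1) / 2" for z
    using sum_squares_bound[of "cmod z" 1] by simp
  then have "(\<integral>\<^sup>+\<omega>. ennreal (cmod (a k \<omega>)) \<partial>M) \<le> (\<integral>\<^sup>+\<omega>. ennreal (((cmod (a k \<omega>))\<^sup>2 + 1) / 2) \<partial>M)"
    by (intro nn_integral_mono ennreal_leI)
  also have "\<dots> = ennreal (integral\<^sup>L M (\<lambda>\<omega>. ((cmod (a k \<omega>))\<^sup>2 + 1) / 2))"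
    using integrable_a_sq[of k]
    by (intro nn_integral_eq_integral integrable_divide_zero Bochner_Integration.integrable_add)
      auto
  also have "integral\<^sup>L M (\<lambda>\<omega>. ((cmod (a k \<omega>))\<^sup>2 + 1) / 2) = 1"
    using integrable_a_sq[of k] integral_a_sq[of k] by (simp add: prob_space)
  finally show ?thesis by simp
qed

lemma integrable_a_mult_cnj: "integrable M (\<lambda>\<omega>. a k \<omega> * cnj (a l \<omega>))"
proof (rule integrableI_bounded)
  have "(\<integral>\<^sup>+\<omega>. ennreal (norm (a k \<omega> * cnj (a l \<omega>))) \<partial>M) \<le> 1"
    using nn_integral_a_mult_le[of k l] by (simp add: norm_mult)
  then show "(\<integral>\<^sup>+\<omega>. ennreal (norm (a k \<omega> * cnj (a l \<omega>))) \<partial>M) < \<infinity>"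
    by (simp add: le_less_trans)
qed measurable

lemma integral_a_mult_cnj: "integral\<^sup>L M (\<lambda>\<omega>. a k \<omega> * cnj (a l \<omega>)) = (if k = l then 1 else 0)"
proof (cases "k = l")
  case True
  have "integral\<^sup>L M (\<lambda>\<omega>. a k \<omega> * cnj (a k \<omega>))
      = integral\<^sup>L M (\<lambda>\<omega>. complex_of_real ((cmod (a k \<omega>))\<^sup>2))"
    by (intro Bochner_Integration.integral_cong) (auto simp: complex_mult_cnj cmod_power2)
  also have "\<dots> = complex_of_real (integral\<^sup>L M (\<lambda>\<omega>. (cmod (a k \<omega>))\<^sup>2))"
    by (rule integral_complex_of_real)
  also have "\<dots> = 1" using integral_a_sq[of k] by simp
  finally show ?thesis using True by simp
next
  case False
  define Y where "Y i = (if i = k then (\<lambda>z::complex. z) else cnj)" for i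
  have ind: "indep_vars (\<lambda>_. borel) (\<lambda>i \<omega>. Y i (a i \<omega>)) {k, l}"
    by (rule indep_vars_subset[OF indep_vars_compose2[OF indep]]) (auto simp: Y_def)
  have "integral\<^sup>L M (\<lambda>\<omega>. \<Prod>i\<in>{k, l}. Y i (a i \<omega>)) = (\<Prod>i\<in>{k, l}. integral\<^sup>L M (\<lambda>\<omega>. Y i (a i \<omega>)))"
    by (rule indep_vars_lebesgue_integral[OF _ ind]) (auto simp: Y_def integrable_a integrable_cnj)
  moreover have "(\<lambda>\<omega>. \<Prod>i\<in>{k, l}. Y i (a i \<omega>)) = (\<lambda>\<omega>. a k \<omega> * cnj (a l \<omega>))"
    using False by (auto simp: Y_def)
  ultimately have "integral\<^sup>L M (\<lambda>\<omega>. a k \<omega> * cnj (a l \<omega>))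
      = integral\<^sup>L M (a k) * integral\<^sup>L M (\<lambda>\<omega>. cnj (a l \<omega>))"
    using False by (simp add: Y_def)
  then show ?thesis using False by (simp add: integral_a)
qed


lemma AE_summable_series:
  assumes u: "summable (\<lambda>k. norm (u k))"
  shows "AE \<omega> in M. summable (\<lambda>k. norm (a k \<omega> * u k))"
proof -
  let ?F = "\<lambda>\<omega>. \<Sum>k. ennreal (cmod (a k \<omega>) * cmod (u k))"
  have mF: "?F \<in> borel_measurable M" by measurable
  have "(\<integral>\<^sup>+\<omega>. ?F \<omega> \<partial>M) = (\<Sum>k. \<integral>\<^sup>+\<omega>. ennreal (cmod (a k \<omega>) * cmod (u k)) \<partial>M)"
    by (rule nn_integral_suminf) measurable
  also have "\<dots> \<le> (\<Sum>k. ennreal (cmod (u k)))"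
  proof (rule suminf_le)
    fix k
    have "(\<integral>\<^sup>+\<omega>. ennreal (cmod (a k \<omega>) * cmod (u k)) \<partial>M)
        = (\<integral>\<^sup>+\<omega>. ennreal (cmod (a k \<omega>)) \<partial>M) * ennreal (cmod (u k))"
      by (subst ennreal_mult'', simp, rule nn_integral_multc, measurable)
    also have "\<dots> \<le> 1 * ennreal (cmod (u k))" by (intro mult_right_mono nn_integral_a_le) simp
    finally show "(\<integral>\<^sup>+\<omega>. ennreal (cmod (a k \<omega>) * cmod (u k)) \<partial>M) \<le> ennreal (cmod (u k))" by simp
  qed (rule summableI, rule summableI)
  also have "\<dots> = ennreal (\<Sum>k. cmod (u k))" by (rule suminf_ennreal2) (use u in auto)
  finally have "(\<integral>\<^sup>+\<omega>. ?F \<omega> \<partial>M) < \<infinity>" by (simp add: le_less_trans)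
  then have "(\<integral>\<^sup>+\<omega>. ?F \<omega> \<partial>M) \<noteq> \<infinity>" by simp
  then have "AE \<omega> in M. ?F \<omega> \<noteq> \<infinity>" by (rule nn_integral_PInf_AE[OF mF])
  then show ?thesis
  proof eventually_elim
    case (elim \<omega>)
    then have "summable (\<lambda>k. cmod (a k \<omega>) * cmod (u k))" by (intro summable_suminf_not_top) auto
    then show ?case by (simp add: norm_mult)
  qed
qed

lemma AE_LIMSEQ_series:
  assumes u: "summable (\<lambda>k. norm (u k))"
  shows "AE \<omega> in M. (\<lambda>N. \<Sum>k<N. a k \<omega> * u k) \<longlonglongrightarrow> (\<Sum>k. a k \<omega> * u k)"
  using AE_summable_series[OF u]
  by eventually_elim (rule summable_LIMSEQ, rule summable_norm_cancel)

lemma nn_integral_series_mult_le: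
  assumes c: "summable c" "\<And>k. 0 \<le> c k" and d: "summable d" "\<And>k. 0 \<le> d k"
  shows "(\<integral>\<^sup>+\<omega>. (\<Sum>k. ennreal (cmod (a k \<omega>) * c k)) * (\<Sum>l. ennreal (cmod (a l \<omega>) * d l)) \<partial>M)
      \<le> ennreal ((\<Sum>k. c k) * (\<Sum>l. d l))"
proof -
  have eq: "(\<Sum>k. ennreal (cmod (a k \<omega>) * c k)) * (\<Sum>l. ennreal (cmod (a l \<omega>) * d l))
      = (\<Sum>k. \<Sum>l. ennreal (cmod (a k \<omega>) * cmod (a l \<omega>)) * ennreal (c k * d l))" for \<omega>
  proof -
    have "(\<Sum>k. ennreal (cmod (a k \<omega>) * c k)) * (\<Sum>l. ennreal (cmod (a l \<omega>) * d l))
        = (\<Sum>k. ennreal (cmod (a k \<omega>) * c k) * (\<Sum>l. ennreal (cmod (a l \<omega>) * d l)))"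
      by (rule ennreal_suminf_multc[symmetric])
    also have "\<dots> = (\<Sum>k. \<Sum>l. ennreal (cmod (a k \<omega>) * c k) * ennreal (cmod (a l \<omega>) * d l))"
      by (simp only: ennreal_suminf_cmult[symmetric])
    also have "\<dots> = (\<Sum>k. \<Sum>l. ennreal (cmod (a k \<omega>) * cmod (a l \<omega>)) * ennreal (c k * d l))"
      using c(2) d(2) by (simp add: ennreal_mult''[symmetric] mult_ac)
    finally show ?thesis .
  qed
  have "(\<integral>\<^sup>+\<omega>. (\<Sum>k. ennreal (cmod (a k \<omega>) * c k)) * (\<Sum>l. ennreal (cmod (a l \<omega>) * d l)) \<partial>M)
      = (\<Sum>k. \<Sum>l. (\<integral>\<^sup>+\<omega>. ennreal (cmod (a k \<omega>) * cmod (a l \<omega>)) \<partial>M) * ennreal (c k * d l))"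
    unfolding eq by (subst nn_integral_suminf, measurable, subst nn_integral_suminf, measurable)
      (simp add: nn_integral_multc)
  also have "\<dots> \<le> (\<Sum>k. \<Sum>l. ennreal (c k * d l))"
  proof -
    have le: "(\<integral>\<^sup>+\<omega>. ennreal (cmod (a k \<omega>) * cmod (a l \<omega>)) \<partial>M) * ennreal (c k * d l)
        \<le> ennreal (c k * d l)" for k l
      using mult_right_mono[OF nn_integral_a_mult_le[of k l], of "ennreal (c k * d l)"] by simp
    show ?thesis by (intro suminf_le summableI le)
  qed
  also have "(\<lambda>k. \<Sum>l. ennreal (c k * d l)) = (\<lambda>k. ennreal (c k * (\<Sum>l. d l)))"
  proof
    fix k show "(\<Sum>l. ennreal (c k * d l)) = ennreal (c k * (\<Sum>l. d l))"
      using c(2) d by (subst suminf_ennreal2) (auto intro: summable_mult simp: suminf_mult)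
  qed
  also have "(\<Sum>k. ennreal (c k * (\<Sum>l. d l))) = ennreal ((\<Sum>k. c k) * (\<Sum>l. d l))"
    using c d by (subst suminf_ennreal2)
      (auto intro!: summable_mult2 mult_nonneg_nonneg suminf_nonneg simp: suminf_mult2)
  finally show ?thesis .
qed

lemma integrable_series_norm_mult:
  assumes u: "summable (\<lambda>k. norm (u k))" and v: "summable (\<lambda>k. norm (v k))"
  shows "integrable M (\<lambda>\<omega>. (\<Sum>k. cmod (a k \<omega>) * cmod (u k)) * (\<Sum>k. cmod (a k \<omega>) * cmod (v k)))"
    (is "integrable M ?w")
proof (rule integrableI_nonneg)
  have AE_summable: "AE \<omega> in M. summable (\<lambda>k. cmod (a k \<omega>) * cmod (u k))
      \<and> summable (\<lambda>k. cmod (a k \<omega>) * cmod (v k))"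
    using AE_summable_series[OF u] AE_summable_series[OF v] by eventually_elim (simp add: norm_mult)
  then show "AE \<omega> in M. 0 \<le> ?w \<omega>"
    by eventually_elim (auto intro!: mult_nonneg_nonneg suminf_nonneg)
  have "AE \<omega> in M. ennreal (?w \<omega>)
      = (\<Sum>k. ennreal (cmod (a k \<omega>) * cmod (u k))) * (\<Sum>l. ennreal (cmod (a l \<omega>) * cmod (v l)))"
    using AE_summable
  proof eventually_elim
    case (elim \<omega>)
    then have "ennreal (\<Sum>k. cmod (a k \<omega>) * cmod (x k)) = (\<Sum>k. ennreal (cmod (a k \<omega>) * cmod (x k)))"
      and "0 \<le> (\<Sum>k. cmod (a k \<omega>) * cmod (x k))"
      if "x = u \<or> x = v" for x
      using that by (auto intro!: suminf_ennreal2[symmetric] suminf_nonneg)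
    then show ?case
      by (simp add: ennreal_mult'')
  qed
  then have "(\<integral>\<^sup>+\<omega>. ennreal (?w \<omega>) \<partial>M)
      = (\<integral>\<^sup>+\<omega>. (\<Sum>k. ennreal (cmod (a k \<omega>) * cmod (u k)))
          * (\<Sum>l. ennreal (cmod (a l \<omega>) * cmod (v l))) \<partial>M)"
    by (rule nn_integral_cong_AE)
  also have "\<dots> \<le> ennreal ((\<Sum>k. cmod (u k)) * (\<Sum>l. cmod (v l)))"
    using u v by (intro nn_integral_series_mult_le) auto
  finally show "(\<integral>\<^sup>+\<omega>. ennreal (?w \<omega>) \<partial>M) < \<infinity>"
    by (simp add: le_less_trans)
qed measurable

lemma integral_partial_series_mult_cnj:
  "integral\<^sup>L M (\<lambda>\<omega>. (\<Sum>k<N. a k \<omega> * u k) * cnj (\<Sum>k<N. a k \<omega> * v k)) = (\<Sum>k<N. u k * cnj (v k))"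
proof -
  have "(\<Sum>k<N. a k \<omega> * u k) * cnj (\<Sum>k<N. a k \<omega> * v k)
      = (\<Sum>k<N. \<Sum>l<N. (u k * cnj (v l)) * (a k \<omega> * cnj (a l \<omega>)))" for \<omega>
    unfolding cnj_sum sum_product by (intro sum.cong refl) (simp add: mult_ac)
  then have "integral\<^sup>L M (\<lambda>\<omega>. (\<Sum>k<N. a k \<omega> * u k) * cnj (\<Sum>k<N. a k \<omega> * v k))
      = (\<Sum>k<N. \<Sum>l<N. (u k * cnj (v l)) * integral\<^sup>L M (\<lambda>\<omega>. a k \<omega> * cnj (a l \<omega>)))"
    by (simp add: Bochner_Integration.integral_sum integrable_mult_right integrable_a_mult_cnj)
  also have "\<dots> = (\<Sum>k<N. u k * cnj (v k))"
    by (simp add: integral_a_mult_cnj if_distrib sum.delta cong: if_cong)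
  finally show ?thesis .
qed

lemma integral_series_mult_cnj:
  assumes u: "summable (\<lambda>k. norm (u k))" and v: "summable (\<lambda>k. norm (v k))"
  shows "integrable M (\<lambda>\<omega>. (\<Sum>k. a k \<omega> * u k) * cnj (\<Sum>k. a k \<omega> * v k))"
    and "integral\<^sup>L M (\<lambda>\<omega>. (\<Sum>k. a k \<omega> * u k) * cnj (\<Sum>k. a k \<omega> * v k)) = (\<Sum>k. u k * cnj (v k))"
proof -
  define s where "s N \<omega> = (\<Sum>k<N. a k \<omega> * u k) * cnj (\<Sum>k<N. a k \<omega> * v k)" for N \<omega>
  define f where "f \<omega> = (\<Sum>k. a k \<omega> * u k) * cnj (\<Sum>k. a k \<omega> * v k)" for \<omega>
  define w where "w \<omega> = (\<Sum>k. cmod (a k \<omega>) * cmod (u k)) * (\<Sum>k. cmod (a k \<omega>) * cmod (v k))" for \<omega>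
  have [measurable]: "s N \<in> borel_measurable M" "f \<in> borel_measurable M" for N
    unfolding s_def f_def by measurable
  have lim: "AE \<omega> in M. (\<lambda>N. s N \<omega>) \<longlonglongrightarrow> f \<omega>"
    using AE_LIMSEQ_series[OF u] AE_LIMSEQ_series[OF v] unfolding s_def f_def
    by eventually_elim (intro tendsto_intros)
  have partial_sum_le: "norm (\<Sum>k<N. a k \<omega> * x k) \<le> (\<Sum>k. cmod (a k \<omega>) * cmod (x k))"
    if "summable (\<lambda>k. norm (a k \<omega> * x k))" for x N \<omega>
    using norm_sum_le_suminf_norm[OF that finite_lessThan] by (simp add: norm_mult)
  have bound: "AE \<omega> in M. norm (s N \<omega>) \<le> w \<omega>" for N
    using AE_summable_series[OF u] AE_summable_series[OF v]
  proof eventually_elim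
    case (elim \<omega>)
    then show ?case
      unfolding s_def w_def norm_mult complex_mod_cnj
      by (intro mult_mono partial_sum_le) (auto simp: norm_mult intro!: suminf_nonneg)
  qed
  have w: "integrable M w"
    unfolding w_def using u v by (rule integrable_series_norm_mult)
  show "integrable M (\<lambda>\<omega>. (\<Sum>k. a k \<omega> * u k) * cnj (\<Sum>k. a k \<omega> * v k))"
    using integrable_dominated_convergence[OF _ _ w lim bound] unfolding f_def by simp
  have "(\<lambda>N. integral\<^sup>L M (s N)) \<longlonglongrightarrow> integral\<^sup>L M f"
    by (rule integral_dominated_convergence[OF _ _ w lim bound]) simp_all
  moreover have "(\<lambda>N. integral\<^sup>L M (s N)) \<longlonglongrightarrow> (\<Sum>k. u k * cnj (v k))"
    unfolding s_def integral_partial_series_mult_cnj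
    by (rule summable_LIMSEQ, rule summable_norm_cancel, rule summable_norm_mult_cnj[OF u v])
  ultimately show "integral\<^sup>L M (\<lambda>\<omega>. (\<Sum>k. a k \<omega> * u k) * cnj (\<Sum>k. a k \<omega> * v k))
      = (\<Sum>k. u k * cnj (v k))"
    unfolding f_def by (rule LIMSEQ_unique)
qed

lemma char_partial_series:
  "(CLINT \<omega>|M. cis (Re (\<Sum>k<N. a k \<omega> * d k))) = complex_of_real (exp (- (\<Sum>k<N. (cmod (d k))\<^sup>2) / 4))"
proof -
  define Y where "Y k z = cis (Re (z * d k))" for k z
  have indep_Y: "indep_vars (\<lambda>_. borel) (\<lambda>k \<omega>. Y k (a k \<omega>)) {..<N}"
    by (rule indep_vars_subset[OF indep_vars_compose2[OF indep]]) (auto simp: Y_def)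
  have integrable_Y: "integrable M (\<lambda>\<omega>. Y k (a k \<omega>))" for k
    unfolding Y_def by (rule integrable_const_bound[where B=1]) simp_all
  have "(\<lambda>\<omega>. cis (Re (\<Sum>k<N. a k \<omega> * d k))) = (\<lambda>\<omega>. \<Prod>k<N. Y k (a k \<omega>))"
    unfolding Y_def by (simp add: Re_sum cis_sum fun_eq_iff)
  then have "(CLINT \<omega>|M. cis (Re (\<Sum>k<N. a k \<omega> * d k))) = (\<Prod>k<N. integral\<^sup>L M (\<lambda>\<omega>. Y k (a k \<omega>)))"
    using indep_vars_lebesgue_integral[OF finite_lessThan indep_Y integrable_Y] by simp
  also have "\<dots> = (\<Prod>k<N. complex_of_real (exp (- (cmod (d k))\<^sup>2 / 4)))"
    using char_a[of "cnj (d _)"] by (simp add: Y_def mult.commute)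
  also have "\<dots> = complex_of_real (exp (\<Sum>k<N. - (cmod (d k))\<^sup>2 / 4))"
    by (simp add: exp_sum)
  finally show ?thesis
    by (simp add: sum_negf sum_divide_distrib)
qed

lemma char_series:
  assumes d: "summable (\<lambda>k. norm (d k))"
  shows "(CLINT \<omega>|M. cis (Re (\<Sum>k. a k \<omega> * d k)))
      = complex_of_real (exp (- (\<Sum>k. (cmod (d k))\<^sup>2) / 4))"
proof -
  have "(\<lambda>N. CLINT \<omega>|M. cis (Re (\<Sum>k<N. a k \<omega> * d k))) \<longlonglongrightarrow> (CLINT \<omega>|M. cis (Re (\<Sum>k. a k \<omega> * d k)))"
  proof (rule integral_dominated_convergence[where w="\<lambda>_. 1"])
    show "AE \<omega> in M. (\<lambda>N. cis (Re (\<Sum>k<N. a k \<omega> * d k))) \<longlonglongrightarrow> cis (Re (\<Sum>k. a k \<omega> * d k))"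
      using AE_LIMSEQ_series[OF d] unfolding cis_conv_exp by eventually_elim (intro tendsto_intros)
  qed simp_all
  moreover have "summable (\<lambda>k. (cmod (d k))\<^sup>2)"
    using summable_norm_mult_cnj[OF d d] by (simp add: norm_mult power2_eq_square)
  then have "(\<lambda>N. CLINT \<omega>|M. cis (Re (\<Sum>k<N. a k \<omega> * d k))) \<longlonglongrightarrow> complex_of_real
      (exp (- (\<Sum>k. (cmod (d k))\<^sup>2) / 4))"
    unfolding char_partial_series by (intro tendsto_intros summable_LIMSEQ) auto
  ultimately show ?thesis
    by (rule LIMSEQ_unique)
qed

lemma AE_sum_mult_series:
  fixes J :: "'w set" and u :: "'w \<Rightarrow> nat \<Rightarrow> complex" and c :: "'w \<Rightarrow> complex"
  assumes J: "finite J" and u: "\<And>w. w \<in> J \<Longrightarrow> summable (\<lambda>k. norm (u w k))"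
  shows "AE \<omega> in M. (\<Sum>w\<in>J. c w * (\<Sum>k. a k \<omega> * u w k)) = (\<Sum>k. a k \<omega> * (\<Sum>w\<in>J. c w * u w k))"
proof -
  have "AE \<omega> in M. \<forall>w\<in>J. summable (\<lambda>k. norm (a k \<omega> * u w k))"
    using J u by (subst AE_finite_all) (auto intro: AE_summable_series)
  then show ?thesis
  proof eventually_elim
    case (elim \<omega>)
    then have s: "summable (\<lambda>k. a k \<omega> * u w k)" if "w \<in> J" for w
      using that by (auto intro: summable_norm_cancel)
    have "(\<Sum>w\<in>J. c w * (\<Sum>k. a k \<omega> * u w k)) = (\<Sum>w\<in>J. \<Sum>k. c w * (a k \<omega> * u w k))"
      using s by (intro sum.cong refl) (simp add: suminf_mult)
    also have "\<dots> = (\<Sum>k. \<Sum>w\<in>J. c w * (a k \<omega> * u w k))"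
      using s by (intro suminf_sum[symmetric] summable_mult)
    also have "\<dots> = (\<Sum>k. a k \<omega> * (\<Sum>w\<in>J. c w * u w k))"
      by (simp add: sum_distrib_left mult_ac)
    finally show ?case .
  qed
qed

lemma AE_diff_series:
  assumes "summable (\<lambda>k. norm (u k))" "summable (\<lambda>k. norm (v k))"
  shows "AE \<omega> in M. (\<Sum>k. a k \<omega> * u k) - (\<Sum>k. a k \<omega> * v k) = (\<Sum>k. a k \<omega> * (u k - v k))"
  using AE_summable_series[OF assms(1)] AE_summable_series[OF assms(2)]
  by eventually_elim (simp add: right_diff_distrib suminf_diff summable_norm_cancel)

lemma char_distr_series:
  fixes J :: "'w set" and u :: "'w \<Rightarrow> nat \<Rightarrow> complex" and t :: "'w \<Rightarrow> complex"
  assumes J: "finite J" and u: "\<And>w. w \<in> J \<Longrightarrow> summable (\<lambda>k. norm (u w k))"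
  shows "(CLINT y|distr M (PiM J (\<lambda>_. borel)) (\<lambda>\<omega>. \<lambda>w\<in>J. \<Sum>k. a k \<omega> * u w k).
      cis (\<Sum>w\<in>J. Re (cnj (t w) * y w)))
    = complex_of_real (exp (- (\<Sum>k. (cmod (\<Sum>w\<in>J. cnj (t w) * u w k))\<^sup>2) / 4))"
proof -
  define d where "d k = (\<Sum>w\<in>J. cnj (t w) * u w k)" for k
  have "(\<lambda>\<omega>. \<lambda>w\<in>J. \<Sum>k. a k \<omega> * u w k) \<in> M \<rightarrow>\<^sub>M PiM J (\<lambda>_. borel)"
    by (rule measurable_restrict) measurable
  then have "(CLINT y|distr M (PiM J (\<lambda>_. borel)) (\<lambda>\<omega>. \<lambda>w\<in>J. \<Sum>k. a k \<omega> * u w k).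
        cis (\<Sum>w\<in>J. Re (cnj (t w) * y w)))
      = (CLINT \<omega>|M. cis (\<Sum>w\<in>J. Re (cnj (t w) * (\<Sum>k. a k \<omega> * u w k))))"
    by (subst integral_distr)
      (auto intro!: Bochner_Integration.integral_cong arg_cong[where f=cis] sum.cong)
  also have "\<dots> = (CLINT \<omega>|M. cis (Re (\<Sum>k. a k \<omega> * d k)))"
  proof (rule integral_cong_AE)
    have "AE \<omega> in M. (\<Sum>w\<in>J. cnj (t w) * (\<Sum>k. a k \<omega> * u w k)) = (\<Sum>k. a k \<omega> * d k)"
      unfolding d_def by (rule AE_sum_mult_series[OF J]) (rule u)
    then show "AE \<omega> in M. cis (\<Sum>w\<in>J. Re (cnj (t w) * (\<Sum>k. a k \<omega> * u w k)))
        = cis (Re (\<Sum>k. a k \<omega> * d k))"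
      by eventually_elim (simp only: Re_sum[symmetric])
  qed measurable
  also have "\<dots> = complex_of_real (exp (- (\<Sum>k. (cmod (d k))\<^sup>2) / 4))"
    unfolding d_def by (intro char_series summable_norm_sum_mult J u)
  finally show ?thesis
    unfolding d_def .
qed

lemma distr_series_eq_if_cov_eq:
  fixes J :: "'w set" and u v :: "'w \<Rightarrow> nat \<Rightarrow> complex"
  assumes J: "finite J"
    and u: "\<And>w. w \<in> J \<Longrightarrow> summable (\<lambda>k. norm (u w k))"
    and v: "\<And>w. w \<in> J \<Longrightarrow> summable (\<lambda>k. norm (v w k))"
    and cov: "\<And>w w'. w \<in> J \<Longrightarrow> w' \<in> J \<Longrightarrow> (\<Sum>k. u w k * cnj (u w' k)) = (\<Sum>k. v w k * cnj (v w' k))"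
  shows "distr M (PiM J (\<lambda>_. borel)) (\<lambda>\<omega>. \<lambda>w\<in>J. \<Sum>k. a k \<omega> * u w k)
       = distr M (PiM J (\<lambda>_. borel)) (\<lambda>\<omega>. \<lambda>w\<in>J. \<Sum>k. a k \<omega> * v w k)"
proof (rule PiM_complex_eq_if_char_eq[OF J])
  have "(\<lambda>\<omega>. \<lambda>w\<in>J. \<Sum>k. a k \<omega> * x w k) \<in> M \<rightarrow>\<^sub>M PiM J (\<lambda>_. borel :: complex measure)"
    for x :: "'w \<Rightarrow> nat \<Rightarrow> complex"
    by (rule measurable_restrict) measurable
  then show "finite_measure (distr M (PiM J (\<lambda>_. borel)) (\<lambda>\<omega>. \<lambda>w\<in>J. \<Sum>k. a k \<omega> * u w k))"
    and "finite_measure (distr M (PiM J (\<lambda>_. borel)) (\<lambda>\<omega>. \<lambda>w\<in>J. \<Sum>k. a k \<omega> * v w k))"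
    by (simp_all add: finite_measure_distr)
  fix t :: "'w \<Rightarrow> complex"
  have "complex_of_real (\<Sum>k. (cmod (\<Sum>w\<in>J. cnj (t w) * u w k))\<^sup>2)
      = (\<Sum>w\<in>J. \<Sum>w'\<in>J. cnj (t w) * t w' * (\<Sum>k. u w k * cnj (u w' k)))"
    by (rule suminf_cmod_sum_sq[OF J u])
  also have "\<dots> = (\<Sum>w\<in>J. \<Sum>w'\<in>J. cnj (t w) * t w' * (\<Sum>k. v w k * cnj (v w' k)))"
    using cov by (intro sum.cong refl) auto
  also have "\<dots> = complex_of_real (\<Sum>k. (cmod (\<Sum>w\<in>J. cnj (t w) * v w k))\<^sup>2)"
    by (rule suminf_cmod_sum_sq[OF J v, symmetric])
  finally show "(CLINT y|distr M (PiM J (\<lambda>_. borel)) (\<lambda>\<omega>. \<lambda>w\<in>J. \<Sum>k. a k \<omega> * u w k).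
        cis (\<Sum>w\<in>J. Re (cnj (t w) * y w)))
      = (CLINT y|distr M (PiM J (\<lambda>_. borel)) (\<lambda>\<omega>. \<lambda>w\<in>J. \<Sum>k. a k \<omega> * v w k).
        cis (\<Sum>w\<in>J. Re (cnj (t w) * y w)))"
    using char_distr_series[where u=u and t=t, OF J u] char_distr_series[where u=v and t=t, OF J v]
    by simp
qed simp_all

end

section \<open>The Szego kernel and Blaschke products\<close>

definition szego_kernel :: "complex \<Rightarrow> complex \<Rightarrow> complex" where
  "szego_kernel p q = 1 / (1 - p * cnj q)"

definition blaschke_product :: "(nat \<Rightarrow> complex) \<Rightarrow> nat \<Rightarrow> complex \<Rightarrow> complex" where
  "blaschke_product zs n z = (\<Prod>j<n. blaschke (zs j) z)"

lemma mem_unit_disk: "z \<in> unit_disk \<longleftrightarrow> norm z < 1"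
  by (simp add: unit_disk_def)

lemma norm_mult_cnj_less_1: "norm p < 1 \<Longrightarrow> norm q < 1 \<Longrightarrow> norm (p * cnj q) < 1"
  by (simp add: norm_mult) (metis mult_strict_mono' norm_ge_zero mult_1_right)

lemma one_minus_mult_cnj_nonzero: "norm p < 1 \<Longrightarrow> norm q < 1 \<Longrightarrow> 1 - p * cnj q \<noteq> 0"
  using norm_mult_cnj_less_1[of p q] by auto

lemma sums_szego_kernel:
  assumes "norm p < 1" "norm q < 1"
  shows "(\<lambda>k. p ^ k * cnj (q ^ k)) sums szego_kernel p q"
proof -
  have "(\<lambda>k. p ^ k * cnj (q ^ k)) = (\<lambda>k. (p * cnj q) ^ k)"
    by (simp add: power_mult_distrib)
  then show ?thesis
    using geometric_sums[OF norm_mult_cnj_less_1[OF assms]] by (simp add: szego_kernel_def)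
qed

lemma summable_power_mult_cnj: "norm p < 1 \<Longrightarrow> norm q < 1 \<Longrightarrow> summable (\<lambda>k. p ^ k * cnj (q ^ k))"
  using sums_szego_kernel by (rule sums_summable)

lemma suminf_power_mult_cnj:
  "norm p < 1 \<Longrightarrow> norm q < 1 \<Longrightarrow> (\<Sum>k. p ^ k * cnj (q ^ k)) = szego_kernel p q"
  using sums_szego_kernel by (rule sums_unique[symmetric])

lemma suminf_scaled_power_mult_cnj:
  assumes "norm w < 1" "norm w' < 1"
  shows "(\<Sum>k. (\<alpha> * w ^ k) * cnj (\<beta> * w' ^ k)) = \<alpha> * cnj \<beta> * szego_kernel w w'"
  using suminf_mult[OF summable_power_mult_cnj[OF assms], of "\<alpha> * cnj \<beta>"]
    suminf_power_mult_cnj[OF assms]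
  by (simp add: mult_ac)

lemma summable_norm_power: "norm (p::complex) < 1 \<Longrightarrow> summable (\<lambda>k. norm (p ^ k))"
proof -
  assume "norm p < 1"
  then have "summable (\<lambda>k. (norm p) ^ k)" by (intro summable_geometric) simp
  then show ?thesis by (simp add: norm_power)
qed

lemma suminf_sum_power_mult_cnj:
  assumes I: "finite I" and p: "\<And>i. i \<in> I \<Longrightarrow> norm (p i) < 1" and q: "norm q < 1"
  shows "summable (\<lambda>k. (\<Sum>i\<in>I. \<alpha> i * p i ^ k) * cnj (q ^ k))"
    and "(\<Sum>k. (\<Sum>i\<in>I. \<alpha> i * p i ^ k) * cnj (q ^ k)) = (\<Sum>i\<in>I. \<alpha> i * szego_kernel (p i) q)"
proof -
  have eq: "(\<lambda>k. (\<Sum>i\<in>I. \<alpha> i * p i ^ k) * cnj (q ^ k)) = (\<lambda>k. \<Sum>i\<in>I. \<alpha> i * (p i ^ k * cnj (q ^ k)))"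
    by (simp add: sum_distrib_left sum_distrib_right mult_ac)
  have s: "summable (\<lambda>k. \<alpha> i * (p i ^ k * cnj (q ^ k)))" if "i \<in> I" for i
    using summable_power_mult_cnj[OF p[OF that] q] by (rule summable_mult)
  show "summable (\<lambda>k. (\<Sum>i\<in>I. \<alpha> i * p i ^ k) * cnj (q ^ k))"
    unfolding eq by (rule summable_sum) (rule s)
  have "(\<Sum>k. \<Sum>i\<in>I. \<alpha> i * (p i ^ k * cnj (q ^ k))) = (\<Sum>i\<in>I. \<Sum>k. \<alpha> i * (p i ^ k * cnj (q ^ k)))"
    by (rule suminf_sum) (rule s)
  also have "\<dots> = (\<Sum>i\<in>I. \<alpha> i * szego_kernel (p i) q)"
  proof (intro sum.cong refl)
    fix i assume i: "i \<in> I"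
    show "(\<Sum>k. \<alpha> i * (p i ^ k * cnj (q ^ k))) = \<alpha> i * szego_kernel (p i) q"
      using suminf_mult[OF summable_power_mult_cnj[OF p[OF i] q], of "\<alpha> i"]
        suminf_power_mult_cnj[OF p[OF i] q] by simp
  qed
  finally show "(\<Sum>k. (\<Sum>i\<in>I. \<alpha> i * p i ^ k) * cnj (q ^ k)) = (\<Sum>i\<in>I. \<alpha> i * szego_kernel (p i) q)"
    unfolding eq .
qed

lemma szego_kernel_blaschke:
  assumes b: "norm \<beta> < 1" and w: "norm w < 1" and q: "norm q < 1"
  shows "szego_kernel w q * (1 - blaschke \<beta> w * cnj (blaschke \<beta> q))
      = (1 - \<beta> * cnj \<beta>) * szego_kernel w \<beta> * szego_kernel \<beta> q"
proof -
  have n1: "1 - cnj \<beta> * w \<noteq> 0" using one_minus_mult_cnj_nonzero[OF w b] by (simp add: mult.commute)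
  have n2: "1 - \<beta> * cnj q \<noteq> 0" using one_minus_mult_cnj_nonzero[OF b q] .
  have n3: "1 - w * cnj q \<noteq> 0" using one_minus_mult_cnj_nonzero[OF w q] .
  have c: "cnj (blaschke \<beta> q) = (cnj q - cnj \<beta>) / (1 - \<beta> * cnj q)"
    by (simp add: blaschke_def)
  define D where "D = (1 - cnj \<beta> * w) * (1 - \<beta> * cnj q)"
  have D: "D \<noteq> 0" using n1 n2 by (simp add: D_def)
  have "blaschke \<beta> w * cnj (blaschke \<beta> q) = (w - \<beta>) * (cnj q - cnj \<beta>) / D"
    unfolding c by (simp add: blaschke_def D_def)
  then have "1 - blaschke \<beta> w * cnj (blaschke \<beta> q) = (D - (w - \<beta>) * (cnj q - cnj \<beta>)) / D"
    using D by (simp add: diff_divide_distrib)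
  also have "D - (w - \<beta>) * (cnj q - cnj \<beta>) = (1 - \<beta> * cnj \<beta>) * (1 - w * cnj q)"
    by (simp add: D_def algebra_simps)
  finally have e: "1 - blaschke \<beta> w * cnj (blaschke \<beta> q)
      = (1 - \<beta> * cnj \<beta>) * (1 - w * cnj q) / ((1 - cnj \<beta> * w) * (1 - \<beta> * cnj q))"
    by (simp add: D_def)
  have k1: "szego_kernel w q * (1 - w * cnj q) = 1" using n3 by (simp add: szego_kernel_def)
  have k2: "szego_kernel w \<beta> * szego_kernel \<beta> q = 1 / ((1 - cnj \<beta> * w) * (1 - \<beta> * cnj q))"
    by (simp add: szego_kernel_def mult.commute)
  have "szego_kernel w q * (1 - blaschke \<beta> w * cnj (blaschke \<beta> q))
      = (1 - \<beta> * cnj \<beta>) * (szego_kernel w q * (1 - w * cnj q)) /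
        ((1 - cnj \<beta> * w) * (1 - \<beta> * cnj q))"
    unfolding e by (simp only: times_divide_eq_right mult.left_commute)
  also have "\<dots> = (1 - \<beta> * cnj \<beta>) * (szego_kernel w \<beta> * szego_kernel \<beta> q)"
    unfolding k1 k2 by simp
  finally show ?thesis by (simp only: mult.assoc)
qed

lemma blaschke_eq_0_iff: "norm \<beta> < 1 \<Longrightarrow> norm z < 1 \<Longrightarrow> blaschke \<beta> z = 0 \<longleftrightarrow> z = \<beta>"
  using one_minus_mult_cnj_nonzero[of z \<beta>] by (auto simp: blaschke_def mult.commute)

lemma blaschke_product_zs: "l < n \<Longrightarrow> blaschke_product zs n (zs l) = 0"
  unfolding blaschke_product_def
  by (subst prod_zero_iff) (auto simp: blaschke_def intro!: bexI[where x=l])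

lemma blaschke_product_nonzero:
  assumes "\<forall>j<n. norm (zs j) < 1" "norm z < 1" "\<forall>j<n. zs j \<noteq> z"
  shows "blaschke_product zs n z \<noteq> 0"
  using assms blaschke_eq_0_iff by (auto simp: blaschke_product_def)

lemma blaschke_product_Suc:
  "blaschke_product zs (Suc n) z = blaschke_product zs n z * blaschke (zs n) z"
  by (simp add: blaschke_product_def)

text \<open>Since \<open>B (zs n) \<noteq> 0\<close>, the hypothesis for \<open>zs n\<close> can be solved for
  \<open>cnj (B q) * szego_kernel (zs n) q\<close>, which is the new term produced by the factor
  \<open>blaschke (zs n)\<close>.\<close>

lemma szego_kernel_blaschke_span_Suc:
  fixes B :: "complex \<Rightarrow> complex"
  assumes \<beta>: "norm (zs n) < 1" and w: "norm w < 1" and B\<beta>: "B (zs n) \<noteq> 0"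
    and d1: "\<And>q. norm q < 1 \<Longrightarrow> szego_kernel w q * (1 - B w * cnj (B q))
        = (\<Sum>j<n. d1 j * szego_kernel (zs j) q)"
    and d2: "\<And>q. norm q < 1 \<Longrightarrow> szego_kernel (zs n) q * (1 - B (zs n) * cnj (B q))
        = (\<Sum>j<n. d2 j * szego_kernel (zs j) q)"
  shows "\<exists>d. \<forall>q. norm q < 1 \<longrightarrow> szego_kernel w q
      * (1 - B w * blaschke (zs n) w * cnj (B q * blaschke (zs n) q))
    = (\<Sum>j<Suc n. d j * szego_kernel (zs j) q)"
proof -
  let ?\<beta> = "zs n"
  define C where "C = B w * (1 - ?\<beta> * cnj ?\<beta>) * szego_kernel w ?\<beta> / B ?\<beta>"
  define d where "d j = (if j = n then C else d1 j - C * d2 j)" for j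
  have "szego_kernel w q * (1 - B w * blaschke ?\<beta> w * cnj (B q * blaschke ?\<beta> q))
      = (\<Sum>j<Suc n. d j * szego_kernel (zs j) q)"
    if q: "norm q < 1" for q
  proof -
    have "szego_kernel w q * (1 - B w * blaschke ?\<beta> w * cnj (B q * blaschke ?\<beta> q))
        = szego_kernel w q * (1 - B w * cnj (B q))
          + B w * cnj (B q) * (szego_kernel w q * (1 - blaschke ?\<beta> w * cnj (blaschke ?\<beta> q)))"
      by (simp add: algebra_simps)
    also have "\<dots> = (\<Sum>j<n. d1 j * szego_kernel (zs j) q)
        + B w * (1 - ?\<beta> * cnj ?\<beta>) * szego_kernel w ?\<beta> * (cnj (B q) * szego_kernel ?\<beta> q)"
      unfolding d1[OF q] szego_kernel_blaschke[OF \<beta> w q] by (simp add: mult_ac)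
    also have "cnj (B q) * szego_kernel ?\<beta> q
        = (szego_kernel ?\<beta> q - (\<Sum>j<n. d2 j * szego_kernel (zs j) q)) / B ?\<beta>"
      using d2[OF q] B\<beta> by (simp add: field_simps)
    also have "B w * (1 - ?\<beta> * cnj ?\<beta>) * szego_kernel w ?\<beta>
        * ((szego_kernel ?\<beta> q - (\<Sum>j<n. d2 j * szego_kernel (zs j) q)) / B ?\<beta>)
        = C * (szego_kernel ?\<beta> q - (\<Sum>j<n. d2 j * szego_kernel (zs j) q))"
      by (simp add: C_def)
    also have "(\<Sum>j<n. d1 j * szego_kernel (zs j) q) + C
        * (szego_kernel ?\<beta> q - (\<Sum>j<n. d2 j * szego_kernel (zs j) q))
        = (\<Sum>j<n. (d1 j - C * d2 j) * szego_kernel (zs j) q) + C * szego_kernel ?\<beta> q"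
      by (simp add: algebra_simps sum_subtractf sum_distrib_left)
    finally show ?thesis
      by (simp add: d_def)
  qed
  then show ?thesis
    by blast
qed

lemma szego_kernel_blaschke_product_span:
  assumes "\<forall>j<n. norm (zs j) < 1" "inj_on zs {..<n}" "norm w < 1"
  shows "\<exists>d. \<forall>q. norm q < 1 \<longrightarrow> szego_kernel w q
      * (1 - blaschke_product zs n w * cnj (blaschke_product zs n q))
    = (\<Sum>j<n. d j * szego_kernel (zs j) q)"
  using assms
proof (induction n arbitrary: w)
  case 0
  then show ?case
    by (auto simp: blaschke_product_def)
next
  case (Suc n)
  have zs: "\<forall>j<n. norm (zs j) < 1" "inj_on zs {..<n}" and \<beta>: "norm (zs n) < 1"
    using Suc.prems by (auto intro: inj_on_subset)
  have B\<beta>: "blaschke_product zs n (zs n) \<noteq> 0"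
    using Suc.prems(2) by (intro blaschke_product_nonzero zs(1) \<beta>) (auto simp: inj_on_def)
  obtain d1 where "\<forall>q. norm q < 1
      \<longrightarrow> szego_kernel w q * (1 - blaschke_product zs n w * cnj (blaschke_product zs n q))
      = (\<Sum>j<n. d1 j * szego_kernel (zs j) q)"
    using Suc.IH[OF zs Suc.prems(3)] by blast
  moreover obtain d2 where "\<forall>q. norm q < 1
      \<longrightarrow> szego_kernel (zs n) q * (1 - blaschke_product zs n (zs n) * cnj (blaschke_product zs n q))
      = (\<Sum>j<n. d2 j * szego_kernel (zs j) q)"
    using Suc.IH[OF zs \<beta>] by blast
  ultimately show ?case
    using szego_kernel_blaschke_span_Suc[where B="blaschke_product zs n" and zs=zs
      and n=n, OF \<beta> Suc.prems(3) B\<beta>]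
    by (simp add: blaschke_product_Suc)
qed

text \<open>Positive definiteness of the Szego kernel: with \<open>h k = (\<Sum>j<n. e j * zs j ^ k)\<close>
  the hypothesis says that \<open>\<Sum>k. h k * cnj (h k) = 0\<close>, hence \<open>h = 0\<close>.\<close>

lemma szego_kernel_lincomb_eq_0:
  fixes zs :: "nat \<Rightarrow> complex"
  assumes zs: "\<forall>j<n. norm (zs j) < 1"
    and vanish: "\<And>l. l < n \<Longrightarrow> (\<Sum>j<n. e j * szego_kernel (zs j) (zs l)) = 0"
    and q: "norm q < 1"
  shows "(\<Sum>j<n. e j * szego_kernel (zs j) q) = 0"
proof -
  define h where "h k = (\<Sum>j<n. e j * zs j ^ k)" for k
  have summable_h: "summable (\<lambda>k. h k * cnj (p ^ k))" if "norm p < 1" for p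
    unfolding h_def by (rule suminf_sum_power_mult_cnj(1)) (use zs that in auto)
  have suminf_h: "(\<Sum>k. h k * cnj (p ^ k)) = (\<Sum>j<n. e j * szego_kernel (zs j) p)" if "norm p < 1"
    for p
    unfolding h_def by (rule suminf_sum_power_mult_cnj(2)) (use zs that in auto)
  have h_cnj_h: "h k * cnj (h k) = (\<Sum>l<n. cnj (e l) * (h k * cnj (zs l ^ k)))" for k
    by (simp add: h_def cnj_sum sum_distrib_left mult_ac)
  have "(\<lambda>k. cnj (e l) * (h k * cnj (zs l ^ k))) sums
      (cnj (e l) * (\<Sum>j<n. e j * szego_kernel (zs j) (zs l)))"
    if "l < n" for l
    using sums_mult[OF summable_sums[OF summable_h], of "zs l" "cnj (e l)"] suminf_h[of "zs l"]
      zs that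
    by simp
  then have "(\<lambda>k. h k * cnj (h k)) sums
      (\<Sum>l<n. cnj (e l) * (\<Sum>j<n. e j * szego_kernel (zs j) (zs l)))"
    unfolding h_cnj_h by (intro sums_sum) simp
  moreover have "complex_of_real ((cmod (h k))\<^sup>2) = h k * cnj (h k)" for k
    by (rule complex_norm_square)
  ultimately have "(\<lambda>k. complex_of_real ((cmod (h k))\<^sup>2)) sums 0"
    using vanish by simp
  then have "(\<lambda>k. (cmod (h k))\<^sup>2) sums 0"
    by (metis sums_of_real_iff of_real_0)
  then have "h k = 0" for k
    using suminf_eq_zero_iff[of "\<lambda>k. (cmod (h k))\<^sup>2"] by (auto simp: sums_iff)
  then show ?thesis
    using suminf_h[OF q] by simp
qed

lemma summable_norm_residual:
  fixes zs :: "nat \<Rightarrow> complex" and w :: complex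
  assumes zs: "\<forall>j<n. norm (zs j) < 1" and w: "norm w < 1"
  shows "summable (\<lambda>k. norm (w ^ k - (\<Sum>j<n. c j * zs j ^ k)))"
proof (rule summable_comparison_test[where g="\<lambda>k. norm (w ^ k) + norm (\<Sum>j<n. c j * zs j ^ k)"])
  show "\<exists>N. \<forall>k\<ge>N. norm (norm (w ^ k - (\<Sum>j<n. c j * zs j ^ k)))
      \<le> norm (w ^ k) + norm (\<Sum>j<n. c j * zs j ^ k)"
    by (auto intro: norm_triangle_ineq4)
  have "summable (\<lambda>k. norm (\<Sum>j<n. c j * zs j ^ k))"
    by (rule summable_norm_sum_mult) (use zs summable_norm_power in auto)
  then show "summable (\<lambda>k. norm (w ^ k) + norm (\<Sum>j<n. c j * zs j ^ k))"
    by (intro summable_add summable_norm_power w)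
qed

lemma suminf_residual_mult_cnj:
  fixes zs :: "nat \<Rightarrow> complex" and n :: nat
  assumes zs: "\<forall>j<n. norm (zs j) < 1" and w: "norm w < 1" and q: "norm q < 1"
  shows "summable (\<lambda>k. (w ^ k - (\<Sum>j<n. c j * zs j ^ k)) * cnj (q ^ k))"
    and "(\<Sum>k. (w ^ k - (\<Sum>j<n. c j * zs j ^ k)) * cnj (q ^ k))
        = szego_kernel w q - (\<Sum>j<n. c j * szego_kernel (zs j) q)"
proof -
  have s1: "summable (\<lambda>k. w ^ k * cnj (q ^ k))" by (rule summable_power_mult_cnj[OF w q])
  have s2: "summable (\<lambda>k. (\<Sum>j<n. c j * zs j ^ k) * cnj (q ^ k))"
    by (rule suminf_sum_power_mult_cnj(1)) (use zs q in auto)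
  have eq: "(\<lambda>k. (w ^ k - (\<Sum>j<n. c j * zs j ^ k)) * cnj (q ^ k))
      = (\<lambda>k. w ^ k * cnj (q ^ k) - (\<Sum>j<n. c j * zs j ^ k) * cnj (q ^ k))"
    by (simp add: left_diff_distrib)
  show "summable (\<lambda>k. (w ^ k - (\<Sum>j<n. c j * zs j ^ k)) * cnj (q ^ k))"
    unfolding eq by (rule summable_diff[OF s1 s2])
  have "(\<Sum>k. (w ^ k - (\<Sum>j<n. c j * zs j ^ k)) * cnj (q ^ k))
      = (\<Sum>k. w ^ k * cnj (q ^ k)) - (\<Sum>k. (\<Sum>j<n. c j * zs j ^ k) * cnj (q ^ k))"
    unfolding eq by (rule suminf_diff[OF s1 s2, symmetric])
  also have "\<dots> = szego_kernel w q - (\<Sum>j<n. c j * szego_kernel (zs j) q)"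
    using suminf_power_mult_cnj[OF w q] suminf_sum_power_mult_cnj(2)[of "{..<n}" zs q c] zs q
    by simp
  finally show "(\<Sum>k. (w ^ k - (\<Sum>j<n. c j * zs j ^ k)) * cnj (q ^ k))
      = szego_kernel w q - (\<Sum>j<n. c j * szego_kernel (zs j) q)" .
qed

lemma suminf_orthogonal_residual_mult_cnj:
  fixes zs :: "nat \<Rightarrow> complex" and n :: nat
  assumes zs: "\<forall>j<n. norm (zs j) < 1" "inj_on zs {..<n}" and w: "norm w < 1" and w': "norm w' < 1"
    and orth: "\<forall>l<n. (\<Sum>k. (w ^ k - (\<Sum>j<n. c j * zs j ^ k)) * cnj (zs l ^ k)) = 0"
  shows "(\<Sum>k. (w ^ k - (\<Sum>j<n. c j * zs j ^ k)) * cnj (w' ^ k))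
    = blaschke_product zs n w * cnj (blaschke_product zs n w') * szego_kernel w w'"
proof -
  obtain d where d: "\<And>q. norm q < 1
      \<Longrightarrow> szego_kernel w q * (1 - blaschke_product zs n w * cnj (blaschke_product zs n q))
      = (\<Sum>j<n. d j * szego_kernel (zs j) q)"
    using szego_kernel_blaschke_product_span[OF zs w] by blast
  have "(\<Sum>j<n. (c j - d j) * szego_kernel (zs j) (zs l)) = 0" if l: "l < n" for l
  proof -
    have "szego_kernel w (zs l) = (\<Sum>j<n. c j * szego_kernel (zs j) (zs l))"
      using orth l suminf_residual_mult_cnj(2)[OF zs(1) w, of "zs l" c] zs by simp
    moreover have "szego_kernel w (zs l) = (\<Sum>j<n. d j * szego_kernel (zs j) (zs l))"
      using d[of "zs l"] blaschke_product_zs[OF l, of zs] zs l by simp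
    ultimately show ?thesis
      by (simp add: left_diff_distrib sum_subtractf)
  qed
  then have "(\<Sum>j<n. (c j - d j) * szego_kernel (zs j) w') = 0"
    by (rule szego_kernel_lincomb_eq_0[OF zs(1) _ w'])
  then have "(\<Sum>j<n. c j * szego_kernel (zs j) w') = (\<Sum>j<n. d j * szego_kernel (zs j) w')"
    by (simp add: left_diff_distrib sum_subtractf)
  then have "(\<Sum>k. (w ^ k - (\<Sum>j<n. c j * zs j ^ k)) * cnj (w' ^ k))
      = szego_kernel w w' - (\<Sum>j<n. d j * szego_kernel (zs j) w')"
    using suminf_residual_mult_cnj(2)[OF zs(1) w w'] by simp
  also have "\<dots> = szego_kernel w w' * (blaschke_product zs n w * cnj (blaschke_product zs n w'))"
    unfolding d[OF w', symmetric] by (simp add: algebra_simps)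
  finally show ?thesis
    by (simp add: mult_ac)
qed

lemma suminf_orthogonal_residual_mult_cnj_residual:
  fixes zs :: "nat \<Rightarrow> complex" and n :: nat
  assumes zs: "\<forall>j<n. norm (zs j) < 1" "inj_on zs {..<n}" and w: "norm w < 1" and w': "norm w' < 1"
    and orth: "\<forall>l<n. (\<Sum>k. (w ^ k - (\<Sum>j<n. c j * zs j ^ k)) * cnj (zs l ^ k)) = 0"
  shows "(\<Sum>k. (w ^ k - (\<Sum>j<n. c j * zs j ^ k)) * cnj (w' ^ k - (\<Sum>j<n. c' j * zs j ^ k)))
    = blaschke_product zs n w * cnj (blaschke_product zs n w') * szego_kernel w w'"
proof -
  let ?r = "\<lambda>k. w ^ k - (\<Sum>j<n. c j * zs j ^ k)"
  have sq: "summable (\<lambda>k. ?r k * cnj (q ^ k))" if "norm q < 1" for q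
    by (rule suminf_residual_mult_cnj(1)[OF zs(1) w that])
  have sj: "summable (\<lambda>k. cnj (c' j) * (?r k * cnj (zs j ^ k)))" if "j < n" for j
    using sq[of "zs j"] zs that by (intro summable_mult) auto
  have "(\<Sum>k. ?r k * cnj (w' ^ k - (\<Sum>j<n. c' j * zs j ^ k)))
      = (\<Sum>k. ?r k * cnj (w' ^ k) - (\<Sum>j<n. cnj (c' j) * (?r k * cnj (zs j ^ k))))"
    by (intro suminf_cong)
      (simp add: cnj_sum sum_distrib_left right_diff_distrib sum_subtractf mult_ac)
  also have "\<dots> = (\<Sum>k. ?r k * cnj (w' ^ k)) - (\<Sum>k. \<Sum>j<n. cnj (c' j) * (?r k * cnj (zs j ^ k)))"
    by (rule suminf_diff[symmetric, OF sq[OF w'] summable_sum]) (use sj in auto)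
  also have "(\<Sum>k. \<Sum>j<n. cnj (c' j) * (?r k * cnj (zs j ^ k)))
      = (\<Sum>j<n. \<Sum>k. cnj (c' j) * (?r k * cnj (zs j ^ k)))"
    by (rule suminf_sum) (use sj in auto)
  also have "\<dots> = 0"
  proof (rule sum.neutral, rule ballI)
    fix j assume "j \<in> {..<n}"
    then show "(\<Sum>k. cnj (c' j) * (?r k * cnj (zs j ^ k))) = 0"
      using suminf_mult[OF sq, of "zs j" "cnj (c' j)"] orth zs by simp
  qed
  finally show ?thesis
    using suminf_orthogonal_residual_mult_cnj[OF zs w w' orth] by simp
qed

section \<open>The conditioned Gaussian analytic function\<close>

lemma measurable_GAF [measurable]:
  assumes "\<And>k. a k \<in> borel_measurable M"
  shows "(\<lambda>\<omega>. GAF a \<omega> z) \<in> borel_measurable M"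
  unfolding GAF_def using assms by measurable

context iid_std_cgauss
begin

lemma AE_mult_GAF_eq_series:
  assumes "norm z < 1"
  shows "AE \<omega> in M. c * GAF a \<omega> z = (\<Sum>k. a k \<omega> * (c * z ^ k))"
  using AE_summable_series[OF summable_norm_power[OF assms]]
proof eventually_elim
  case (elim \<omega>)
  have "(\<Sum>k. a k \<omega> * (c * z ^ k)) = (\<Sum>k. c * (a k \<omega> * z ^ k))"
    by (simp only: mult.left_commute)
  also have "\<dots> = c * GAF a \<omega> z"
    unfolding GAF_def using summable_norm_cancel[OF elim] by (rule suminf_mult)
  finally show ?case ..
qed

lemma AE_GAF_lincomb_eq_series:
  fixes zs :: "nat \<Rightarrow> complex"
  assumes zs: "\<forall>j<n. norm (zs j) < 1" and z: "norm z < 1"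
  shows "AE \<omega> in M. GAF a \<omega> z - (\<Sum>j<n. c j * GAF a \<omega> (zs j))
      = (\<Sum>k. a k \<omega> * (z ^ k - (\<Sum>j<n. c j * zs j ^ k)))"
proof -
  have lincomb: "summable (\<lambda>k. norm (\<Sum>j<n. c j * zs j ^ k))"
    by (rule summable_norm_sum_mult) (use zs summable_norm_power in auto)
  have "AE \<omega> in M. (\<Sum>j<n. c j * (\<Sum>k. a k \<omega> * zs j ^ k)) = (\<Sum>k. a k \<omega> * (\<Sum>j<n. c j * zs j ^ k))"
    by (rule AE_sum_mult_series) (use zs summable_norm_power in auto)
  then show ?thesis
    using AE_diff_series[OF summable_norm_power[OF z] lincomb]
    by eventually_elim (simp add: GAF_def)
qed

lemma L2_inner_series:
  assumes u: "summable (\<lambda>k. norm (u k))" and v: "summable (\<lambda>k. norm (v k))"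
    and X: "X \<in> borel_measurable M" "AE \<omega> in M. X \<omega> = (\<Sum>k. a k \<omega> * u k)"
    and Y: "Y \<in> borel_measurable M" "AE \<omega> in M. Y \<omega> = (\<Sum>k. a k \<omega> * v k)"
  shows "L2_inner M X Y = (\<Sum>k. u k * cnj (v k))"
proof -
  have [measurable]: "X \<in> borel_measurable M" "Y \<in> borel_measurable M"
    using X(1) Y(1) .
  have "L2_inner M X Y = integral\<^sup>L M (\<lambda>\<omega>. (\<Sum>k. a k \<omega> * u k) * cnj (\<Sum>k. a k \<omega> * v k))"
    unfolding L2_inner_def using X(2) Y(2)
    by (intro integral_cong_AE) (measurable, auto elim: AE_mp)
  also have "\<dots> = (\<Sum>k. u k * cnj (v k))"
    by (rule integral_series_mult_cnj(2)[OF u v])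
  finally show ?thesis .
qed

lemma conditioned_process_AE_series:
  assumes g: "conditioned_process M (GAF a) zs n g" and zs: "\<forall>j<n. norm (zs j) < 1"
  obtains c where "\<And>z. z \<in> unit_disk \<Longrightarrow> AE \<omega> in M. g \<omega> z
      = (\<Sum>k. a k \<omega> * (z ^ k - (\<Sum>j<n. c z j * zs j ^ k)))"
    and "\<And>z l. z \<in> unit_disk \<Longrightarrow> l < n \<Longrightarrow> (\<Sum>k. (z ^ k - (\<Sum>j<n. c z j * zs j ^ k)) * cnj (zs l ^ k))
        = 0"
proof -
  have "\<exists>c. (AE \<omega> in M. g \<omega> z = (\<Sum>k. a k \<omega> * (z ^ k - (\<Sum>j<n. c j * zs j ^ k))))
    \<and> (\<forall>l<n. (\<Sum>k. (z ^ k - (\<Sum>j<n. c j * zs j ^ k)) * cnj (zs l ^ k)) = 0)" if z: "z \<in> unit_disk" for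
        z
  proof -
    obtain c where g_meas: "(\<lambda>\<omega>. g \<omega> z) \<in> borel_measurable M"
      and AE_g: "AE \<omega> in M. g \<omega> z = GAF a \<omega> z - (\<Sum>j<n. c j * GAF a \<omega> (zs j))"
      and orth: "\<And>l. l < n \<Longrightarrow> L2_inner M (\<lambda>\<omega>. g \<omega> z) (\<lambda>\<omega>. GAF a \<omega> (zs l)) = 0"
      using g z unfolding conditioned_process_def by blast
    have z_disk: "norm z < 1"
      using z by (simp add: mem_unit_disk)
    have AE_series: "AE \<omega> in M. g \<omega> z = (\<Sum>k. a k \<omega> * (z ^ k - (\<Sum>j<n. c j * zs j ^ k)))"
      using AE_g AE_GAF_lincomb_eq_series[OF zs z_disk] by eventually_elim simp
    have "(\<Sum>k. (z ^ k - (\<Sum>j<n. c j * zs j ^ k)) * cnj (zs l ^ k)) = 0" if "l < n" for l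
      using orth[OF that] zs that g_meas AE_series
      by (subst (asm) L2_inner_series[where u="\<lambda>k. z ^ k - (\<Sum>j<n. c j * zs j ^ k)"
        and v="\<lambda>k. zs l ^ k"])
        (auto intro: summable_norm_residual[OF zs z_disk] summable_norm_power simp: GAF_def)
    with AE_series show ?thesis
      by blast
  qed
  then have "\<forall>z\<in>unit_disk. \<exists>c. (AE \<omega> in M. g \<omega> z = (\<Sum>k. a k \<omega> * (z ^ k - (\<Sum>j<n. c j * zs j ^ k))))
    \<and> (\<forall>l<n. (\<Sum>k. (z ^ k - (\<Sum>j<n. c j * zs j ^ k)) * cnj (zs l ^ k)) = 0)"
    by blast
  then obtain c where "\<forall>z\<in>unit_disk.
      (AE \<omega> in M. g \<omega> z = (\<Sum>k. a k \<omega> * (z ^ k - (\<Sum>j<n. c z j * zs j ^ k))))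
    \<and> (\<forall>l<n. (\<Sum>k. (z ^ k - (\<Sum>j<n. c z j * zs j ^ k)) * cnj (zs l ^ k)) = 0)"
    by (rule bchoice[THEN exE])
  then show ?thesis
    using that by blast
qed

lemma finite_marginal_blaschke_GAF_eq_conditioned:
  assumes g: "conditioned_process M (GAF a) zs n g"
    and zs: "\<forall>j<n. norm (zs j) < 1" "inj_on zs {..<n}"
    and J: "finite J" "J \<subseteq> unit_disk"
  shows "distr M (PiM J (\<lambda>_. borel)) (\<lambda>\<omega>. \<lambda>z\<in>J. blaschke_product zs n z * GAF a \<omega> z)
    = distr M (PiM J (\<lambda>_. borel)) (\<lambda>\<omega>. \<lambda>z\<in>J. g \<omega> z)"
proof -
  obtain c where AE_g: "\<And>z. z \<in> unit_disk \<Longrightarrow> AE \<omega> in M. g \<omega> z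
      = (\<Sum>k. a k \<omega> * (z ^ k - (\<Sum>j<n. c z j * zs j ^ k)))"
    and orth: "\<And>z l. z \<in> unit_disk \<Longrightarrow> l < n
        \<Longrightarrow> (\<Sum>k. (z ^ k - (\<Sum>j<n. c z j * zs j ^ k)) * cnj (zs l ^ k)) = 0"
    using conditioned_process_AE_series[OF g zs(1)] by blast
  define u where "u z k = blaschke_product zs n z * z ^ k" for z k
  define v where "v z k = z ^ k - (\<Sum>j<n. c z j * zs j ^ k)" for z k
  have disk: "norm z < 1" "z \<in> unit_disk" if "z \<in> J" for z
    using J that by (auto simp: mem_unit_disk)
  have "distr M (PiM J (\<lambda>_. borel)) (\<lambda>\<omega>. \<lambda>z\<in>J. blaschke_product zs n z * GAF a \<omega> z)
      = distr M (PiM J (\<lambda>_. borel)) (\<lambda>\<omega>. \<lambda>z\<in>J. \<Sum>k. a k \<omega> * u z k)"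
    unfolding u_def using disk
    by (intro distr_PiM_AE_cong[OF J(1)] AE_mult_GAF_eq_series) measurable
  also have "\<dots> = distr M (PiM J (\<lambda>_. borel)) (\<lambda>\<omega>. \<lambda>z\<in>J. \<Sum>k. a k \<omega> * v z k)"
  proof (rule distr_series_eq_if_cov_eq[OF J(1)])
    fix w w' assume w: "w \<in> J" and w': "w' \<in> J"
    show "(\<Sum>k. u w k * cnj (u w' k)) = (\<Sum>k. v w k * cnj (v w' k))"
      unfolding u_def v_def
      using suminf_scaled_power_mult_cnj[OF disk(1)[OF w] disk(1)[OF w']]
        suminf_orthogonal_residual_mult_cnj_residual[OF zs disk(1)[OF w] disk(1)[OF w']]
          orth[OF disk(2)[OF w]]
      by simp
  qed (use zs disk in \<open>auto simp: u_def v_def norm_mult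
      intro: summable_mult summable_norm_power summable_norm_residual\<close>)
  also have "\<dots> = distr M (PiM J (\<lambda>_. borel)) (\<lambda>\<omega>. \<lambda>z\<in>J. g \<omega> z)"
  proof (rule distr_PiM_AE_cong[OF J(1)])
    fix z assume z: "z \<in> J"
    show "AE \<omega> in M. (\<Sum>k. a k \<omega> * v z k) = g \<omega> z"
      using AE_g[OF disk(2)[OF z]] unfolding v_def by eventually_elim simp
    show "(\<lambda>\<omega>. g \<omega> z) \<in> borel_measurable M"
      using g disk(2)[OF z] unfolding conditioned_process_def by blast
  qed measurable
  finally show ?thesis .
qed

end

theorem proposition12:
  fixes M :: "'a measure" and a :: "nat \<Rightarrow> 'a \<Rightarrow> complex"
    and n :: nat and zs :: "nat \<Rightarrow> complex" and g :: "'a \<Rightarrow> complex \<Rightarrow> complex"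
  assumes "prob_space M"
    and "prob_space.indep_vars M (\<lambda>_. borel) a UNIV"
    and "\<forall>k. distributed M lborel (a k) std_cgauss_density"
    and "\<forall>j<n. zs j \<in> unit_disk"
    and "inj_on zs {..<n}"
    and "conditioned_process M (GAF a) zs n g"
  shows "distr M (PiM unit_disk (\<lambda>_. borel))
           (\<lambda>\<omega>. \<lambda>z\<in>unit_disk. (\<Prod>j<n. blaschke (zs j) z) * GAF a \<omega> z)
       = distr M (PiM unit_disk (\<lambda>_. borel)) (\<lambda>\<omega>. \<lambda>z\<in>unit_disk. g \<omega> z)"
proof -
  interpret iid_std_cgauss M a
    using assms(1-3) by (simp add: iid_std_cgauss_def iid_std_cgauss_axioms_def)
  have zs: "\<forall>j<n. norm (zs j) < 1"
    using assms(4) by (simp add: mem_unit_disk)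
  have "distr M (PiM unit_disk (\<lambda>_. borel)) (\<lambda>\<omega>. \<lambda>z\<in>unit_disk. blaschke_product zs n z * GAF a \<omega> z)
      = distr M (PiM unit_disk (\<lambda>_. borel)) (\<lambda>\<omega>. \<lambda>z\<in>unit_disk. g \<omega> z)"
  proof (rule distr_PiM_eq_if_finite_marginals_eq[OF finite_measure_axioms])
    show "(\<lambda>\<omega>. \<lambda>z\<in>unit_disk. g \<omega> z) \<in> M \<rightarrow>\<^sub>M PiM unit_disk (\<lambda>_. borel)"
      using assms(6) by (auto simp: conditioned_process_def intro!: measurable_restrict)
  qed (use finite_marginal_blaschke_GAF_eq_conditioned[OF assms(6) zs assms(5)]
      in \<open>auto intro!: measurable_restrict\<close>)
  then show ?thesis
    by (simp add: blaschke_product_def)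
qed

end
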